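(* Let $f\in\mathrm{Rat}_2$ have fixed point multipliers $\mu_1,\mu_2,\mu_3$ (fixed points counted with multiplicity). Then $$\mu_1\mu_2\mu_3-(\mu_1+\mu_2+\mu_3)+2=0,$$ equivalently $\sigma_3=\sigma_1-2$. Conversely every unordered triple $\{\mu_1,\mu_2,\mu_3\}$ of complex numbers satisfying this equation occurs as the triple of fixed point multipliers of some $f\in\mathrm{Rat}_2$, and two maps in $\mathrm{Rat}_2$ are holomorphically conjugate if and only if they have the same unordered triple of fixed point multipliers. Consequently the map $\langle f\rangle\mapsto(\sigma_1,\sigma_2)$ is a bijection (canonical isomorphism) from $\mathcal M_2$ onto $\mathbf C^2$.
   Context: $\mathrm{Rat}_2$ is the space of holomorphic degree-$2$ maps of the Riemann sphere $\hat{\mathbf C}$. Every $f\in\mathrm{Rat}_2$ has exactly three fixed points counted with multiplicity; the multiplier of a fixed point $z_i$ is $f'(z_i)$ (computed in the coordinate $w=1/z$ if $z_i=\infty$), and a multiple fixed point is listed with its multiplicity (a fixed point has multiplier $1$ iff it is multiple). $\sigma_1=\mu_1+\mu_2+\mu_3$, $\sigma_2=\mu_1\mu_2+\mu_1\mu_3+\mu_2\mu_3$, $\sigma_3=\mu_1\mu_2\mu_3$. Two maps $f,\tilde f$ are holomorphically conjugate if $\tilde f=g\circ f\circ g^{-1}$ for some Möbius transformation $g\in\mathrm{PSL}(2,\mathbf C)$. $\mathcal M_2$ ("moduli space") is the set of holomorphic conjugacy classes $\langle f\rangle$ of maps $f\in\mathrm{Rat}_2$. *)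

theory Defs
  imports "HOL-Complex_Analysis.Complex_Analysis" "HOL-Library.Multiset"
begin

text \<open>The Riemann sphere: None is the point at infinity.\<close>
type_synonym sphere = "complex option"

definition hom :: "sphere \<Rightarrow> complex \<times> complex" where
  "hom p = (case p of Some z \<Rightarrow> (z, 1) | None \<Rightarrow> (1, 0))"

definition proj :: "complex \<Rightarrow> complex \<Rightarrow> sphere" where
  "proj u v = (if v = 0 then None else Some (u / v))"

text \<open>Coefficients (a0,a1,a2,b0,b1,b2) of two binary quadratic forms
  F = a0 X^2 + a1 XY + a2 Y^2, G = b0 X^2 + b1 XY + b2 Y^2.\<close>
type_synonym coeffs2 = "complex \<times> complex \<times> complex \<times> complex \<times> complex \<times> complex"

definition formF :: "coeffs2 \<Rightarrow> complex \<Rightarrow> complex \<Rightarrow> complex" where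
  "formF c X Y = (case c of (a0,a1,a2,b0,b1,b2) \<Rightarrow> a0*X^2 + a1*X*Y + a2*Y^2)"

definition formG :: "coeffs2 \<Rightarrow> complex \<Rightarrow> complex \<Rightarrow> complex" where
  "formG c X Y = (case c of (a0,a1,a2,b0,b1,b2) \<Rightarrow> b0*X^2 + b1*X*Y + b2*Y^2)"

definition coprime_forms :: "coeffs2 \<Rightarrow> bool" where
  "coprime_forms c \<longleftrightarrow> (\<forall>X Y. (X, Y) \<noteq> (0, 0) \<longrightarrow> \<not> (formF c X Y = 0 \<and> formG c X Y = 0))"

definition ratmap :: "coeffs2 \<Rightarrow> sphere \<Rightarrow> sphere" where
  "ratmap c p = (case hom p of (X, Y) \<Rightarrow> proj (formF c X Y) (formG c X Y))"

text \<open>Rat_2: holomorphic degree-2 self-maps of the sphere, i.e. maps [X:Y] \<mapsto> [F:G]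
  with F, G coprime binary quadratic forms.\<close>
definition Rat2 :: "(sphere \<Rightarrow> sphere) set" where
  "Rat2 = {ratmap c | c. coprime_forms c}"

definition mobius :: "complex \<Rightarrow> complex \<Rightarrow> complex \<Rightarrow> complex \<Rightarrow> sphere \<Rightarrow> sphere" where
  "mobius a b c d p = (case hom p of (X, Y) \<Rightarrow> proj (a*X + b*Y) (c*X + d*Y))"

definition hol_conj :: "(sphere \<Rightarrow> sphere) \<Rightarrow> (sphere \<Rightarrow> sphere) \<Rightarrow> bool" where
  "hol_conj f f' \<longleftrightarrow> (\<exists>a b c d. a*d - b*c \<noteq> 0 \<and>
       f' = mobius a b c d \<circ> f \<circ> inv (mobius a b c d))"

text \<open>Local coordinates: around a finite point the coordinate z, around infinity w = 1/z.\<close>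
definition from_chart :: "sphere \<Rightarrow> complex \<Rightarrow> sphere" where
  "from_chart p w = (case p of Some _ \<Rightarrow> Some w | None \<Rightarrow> (if w = 0 then None else Some (1 / w)))"

definition to_chart :: "sphere \<Rightarrow> sphere \<Rightarrow> complex" where
  "to_chart p q = (case p of
      Some _ \<Rightarrow> (case q of Some z \<Rightarrow> z | None \<Rightarrow> 0)
    | None \<Rightarrow> (case q of None \<Rightarrow> 0 | Some z \<Rightarrow> 1 / z))"

definition chart_pt :: "sphere \<Rightarrow> complex" where
  "chart_pt p = (case p of Some z \<Rightarrow> z | None \<Rightarrow> 0)"

definition local_expr :: "(sphere \<Rightarrow> sphere) \<Rightarrow> sphere \<Rightarrow> complex \<Rightarrow> complex" where
  "local_expr f p = (\<lambda>w. to_chart p (f (from_chart p w)))"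

definition multiplier :: "(sphere \<Rightarrow> sphere) \<Rightarrow> sphere \<Rightarrow> complex" where
  "multiplier f p = deriv (local_expr f p) (chart_pt p)"

definition fix_multiplicity :: "(sphere \<Rightarrow> sphere) \<Rightarrow> sphere \<Rightarrow> nat" where
  "fix_multiplicity f p = nat (zorder (\<lambda>w. local_expr f p w - w) (chart_pt p))"

definition fix_multipliers :: "(sphere \<Rightarrow> sphere) \<Rightarrow> complex multiset" where
  "fix_multipliers f = (\<Sum>p\<in>{p. f p = p}. replicate_mset (fix_multiplicity f p) (multiplier f p))"

definition sigma12 :: "complex multiset \<Rightarrow> complex \<times> complex" where
  "sigma12 M = (THE s. \<exists>m1 m2 m3. M = {#m1, m2, m3#} \<and>
                   s = (m1 + m2 + m3, m1*m2 + m1*m3 + m2*m3))"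

definition conj_rel :: "((sphere \<Rightarrow> sphere) \<times> (sphere \<Rightarrow> sphere)) set" where
  "conj_rel = {(f, g). f \<in> Rat2 \<and> g \<in> Rat2 \<and> hol_conj f g}"

definition M2 :: "(sphere \<Rightarrow> sphere) set set" where
  "M2 = Rat2 // conj_rel"

end

theory Submission
  imports Defs "HOL-Computational_Algebra.Fundamental_Theorem_Algebra"
begin

text \<open>A degree-2 map is \<open>[X : Y] \<mapsto> [F : G]\<close> for coprime binary quadratic forms \<open>F\<close>, \<open>G\<close>.
  Its fixed points are the zeros of the cubic form \<open>Y F - X G\<close>, with multiplicity the order of the
  zero, and at a fixed point with \<open>(F, G) = l (X, Y)\<close> the multiplier is \<open>tr D(F, G) / l - 2\<close>.
  Both descriptions are covariant under the action of \<open>GL(2, \<complex>)\<close> on \<open>(F, G)\<close>, so the multiset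
  of multipliers is a conjugacy invariant. Sending two distinct fixed points to \<open>0\<close> and \<open>\<infinity>\<close>
  conjugates the map to \<open>(z\<^sup>2 + a z) / (b z + 1)\<close> with \<open>a b \<noteq> 1\<close>, whose multipliers are \<open>a\<close>,
  \<open>b\<close> and \<open>(2 - a - b) / (1 - a b)\<close>; a map with a single fixed point is conjugate to
  \<open>z + 1/z\<close>, with multipliers \<open>1, 1, 1\<close>. Hence \<open>\<sigma>\<^sub>3 = \<sigma>\<^sub>1 - 2\<close>, every such triple occurs, and
  equal triples give conjugate maps. Finally \<open>(\<sigma>\<^sub>1, \<sigma>\<^sub>2)\<close> determines \<open>\<sigma>\<^sub>3\<close>, and the three
  elementary symmetric functions determine the triple as the roots of a monic cubic.\<close>

section \<open>Homogeneous coordinates and Moebius maps\<close>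

lemma hom_Some [simp]: "hom (Some z) = (z, 1)"
  and hom_None [simp]: "hom None = (1, 0)"
  by (simp_all add: hom_def)

lemma hom_nonzero: "hom p \<noteq> (0, 0)"
  by (cases p) simp_all

lemma proj_hom: "hom p = (X, Y) \<Longrightarrow> proj X Y = p"
  by (cases p) (auto simp: proj_def)

lemma proj_scale: "k \<noteq> 0 \<Longrightarrow> proj (k * u) (k * v) = proj u v"
  by (simp add: proj_def)

lemma hom_proj:
  assumes "(u, v) \<noteq> (0, 0)"
  obtains k where "k \<noteq> 0" "hom (proj u v) = (k * u, k * v)"
proof (cases "v = 0")
  case True
  with assms show ?thesis by (intro that[of "1 / u"]) (auto simp: proj_def)
next
  case False
  then show ?thesis by (intro that[of "1 / v"]) (auto simp: proj_def)
qed

lemma proj_eq_iff: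
  assumes "(u, v) \<noteq> (0, 0)" "hom p = (X, Y)"
  shows "proj u v = p \<longleftrightarrow> Y * u = X * v"
  using assms by (cases p) (auto simp: proj_def field_simps)

lemma linear_image_nonzero:
  fixes a b c d u v :: complex
  assumes "a * d - b * c \<noteq> 0" "(u, v) \<noteq> (0, 0)"
  shows "(a * u + b * v, c * u + d * v) \<noteq> (0, 0)"
proof
  assume "(a * u + b * v, c * u + d * v) = (0, 0)"
  moreover have "(a * d - b * c) * u = d * (a * u + b * v) - b * (c * u + d * v)"
    and "(a * d - b * c) * v = a * (c * u + d * v) - c * (a * u + b * v)"
    by (simp_all add: algebra_simps)
  ultimately show False
    using assms by auto
qed

lemma mobius_Some [simp]: "mobius a b c d (Some z) = proj (a * z + b) (c * z + d)"
  and mobius_None [simp]: "mobius a b c d None = proj a c"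
  by (simp_all add: mobius_def)

lemma mobius_proj:
  assumes "(u, v) \<noteq> (0, 0)"
  shows "mobius a b c d (proj u v) = proj (a * u + b * v) (c * u + d * v)"
proof -
  obtain k where "k \<noteq> 0" "hom (proj u v) = (k * u, k * v)"
    using hom_proj[OF assms] .
  then show ?thesis
    using proj_scale[of k "a * u + b * v" "c * u + d * v"] by (simp add: mobius_def algebra_simps)
qed

lemma mobius_hom_proportional:
  assumes "a * d - b * c \<noteq> 0" "hom x = (X, Y)" "hom (mobius a b c d x) = (U, V)"
  obtains k where "k \<noteq> 0" "a * X + b * Y = k * U" "c * X + d * Y = k * V"
proof -
  have "(a * X + b * Y, c * X + d * Y) \<noteq> (0, 0)"
    using linear_image_nonzero[OF assms(1)] hom_nonzero[of x] assms(2) by simp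
  then obtain \<kappa> where "\<kappa> \<noteq> 0"
    and "hom (proj (a * X + b * Y) (c * X + d * Y)) = (\<kappa> * (a * X + b * Y), \<kappa> * (c * X + d * Y))"
    by (rule hom_proj)
  with assms(2,3) show ?thesis
    by (intro that[of "1 / \<kappa>"]) (auto simp: mobius_def)
qed

lemma mobius_comp:
  assumes "a' * d' - b' * c' \<noteq> 0"
  shows "mobius a b c d \<circ> mobius a' b' c' d' =
    mobius (a * a' + b * c') (a * b' + b * d') (c * a' + d * c') (c * b' + d * d')"
proof
  fix p
  obtain X Y where h: "hom p = (X, Y)"
    by fastforce
  have "(a' * X + b' * Y, c' * X + d' * Y) \<noteq> (0, 0)"
    using linear_image_nonzero[OF assms] hom_nonzero[of p] h by simp
  then show "(mobius a b c d \<circ> mobius a' b' c' d') p =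
      mobius (a * a' + b * c') (a * b' + b * d') (c * a' + d * c') (c * b' + d * d') p"
    by (simp add: mobius_def[of a' b' c' d'] mobius_def[of "a * a' + b * c'"] h mobius_proj algebra_simps)
qed

lemma mobius_scalar: "k \<noteq> 0 \<Longrightarrow> mobius k 0 0 k = id"
  by (auto simp: fun_eq_iff mobius_def proj_scale proj_hom split: prod.split)

lemma mobius_adj_comp:
  assumes "a * d - b * c \<noteq> 0"
  shows "mobius a b c d \<circ> mobius d (-b) (-c) a = id"
    and "mobius d (-b) (-c) a \<circ> mobius a b c d = id"
proof -
  have "d * a - (-b) * (-c) \<noteq> 0"
    using assms by (simp add: algebra_simps)
  then show "mobius a b c d \<circ> mobius d (-b) (-c) a = id"
    using mobius_scalar[OF assms] by (simp add: mobius_comp algebra_simps)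
  show "mobius d (-b) (-c) a \<circ> mobius a b c d = id"
    using mobius_scalar[OF assms] assms by (simp add: mobius_comp algebra_simps)
qed

lemma inv_mobius: "a * d - b * c \<noteq> 0 \<Longrightarrow> inv (mobius a b c d) = mobius d (-b) (-c) a"
  by (intro inv_unique_comp mobius_adj_comp)

lemma bij_mobius: "a * d - b * c \<noteq> 0 \<Longrightarrow> bij (mobius a b c d)"
  using mobius_adj_comp o_bij by metis

lemma mobius_two_points:
  assumes "x \<noteq> y"
  obtains p q r s where "p * s - q * r \<noteq> 0" "mobius p q r s (Some 0) = x" "mobius p q r s None = y"
proof -
  obtain X1 X2 where hx: "hom x = (X1, X2)"
    by fastforce
  obtain Y1 Y2 where hy: "hom y = (Y1, Y2)"
    by fastforce
  have "Y1 * X2 - X1 * Y2 \<noteq> 0"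
    using assms hx hy by (cases x; cases y) auto
  then show ?thesis
    using proj_hom[OF hx] proj_hom[OF hy]
    by (intro that[where p = Y1 and q = X1 and r = Y2 and s = X2]) simp_all
qed

lemma hol_conj_refl: "hol_conj f f"
  unfolding hol_conj_def using mobius_scalar[of 1] by (intro exI[of _ 1] exI[of _ 0]) simp

lemma hol_conj_sym:
  assumes "hol_conj f g"
  shows "hol_conj g f"
proof -
  from assms obtain a b c d where det: "a * d - b * c \<noteq> 0"
    and g: "g = mobius a b c d \<circ> f \<circ> inv (mobius a b c d)"
    unfolding hol_conj_def by blast
  have "f = inv (mobius a b c d) \<circ> g \<circ> inv (inv (mobius a b c d))"
    using bij_mobius[OF det] by (simp add: g fun_eq_iff inv_inv_eq bij_is_inj)
  moreover have "d * a - (-b) * (-c) \<noteq> 0"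
    using det by (simp add: algebra_simps)
  ultimately show ?thesis
    unfolding hol_conj_def inv_mobius[OF det] by blast
qed

lemma hol_conj_trans:
  assumes "hol_conj f g" "hol_conj g h"
  shows "hol_conj f h"
proof -
  from assms obtain a b c d a' b' c' d' where det: "a * d - b * c \<noteq> 0" "a' * d' - b' * c' \<noteq> 0"
    and g: "g = mobius a b c d \<circ> f \<circ> inv (mobius a b c d)"
    and h: "h = mobius a' b' c' d' \<circ> g \<circ> inv (mobius a' b' c' d')"
    unfolding hol_conj_def by blast
  let ?M = "mobius a' b' c' d' \<circ> mobius a b c d"
  have "h = ?M \<circ> f \<circ> inv ?M"
    using det by (simp add: g h o_inv_distrib bij_mobius comp_assoc)
  moreover have "?M = mobius (a' * a + b' * c) (a' * b + b' * d) (c' * a + d' * c) (c' * b + d' * d)"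
    by (rule mobius_comp[OF det(1)])
  moreover have "(a' * a + b' * c) * (c' * b + d' * d) - (a' * b + b' * d) * (c' * a + d' * c) =
      (a' * d' - b' * c') * (a * d - b * c)"
    by (simp add: algebra_simps)
  ultimately show ?thesis
    using det unfolding hol_conj_def by (metis mult_eq_0_iff)
qed

lemma equiv_conj_rel: "equiv Rat2 conj_rel"
  by (rule equivI)
     (auto simp: conj_rel_def refl_on_def sym_def trans_def intro: hol_conj_refl hol_conj_sym hol_conj_trans)

section \<open>Conjugating a pair of quadratic forms\<close>

lemma formF_scale: "formF c (k * X) (k * Y) = k^2 * formF c X Y"
  and formG_scale: "formG c (k * X) (k * Y) = k^2 * formG c X Y"
  by (cases c; simp add: formF_def formG_def power2_eq_square algebra_simps)+

text \<open>Coefficients of \<open>s F \<circ> M - q G \<circ> M\<close> and \<open>p G \<circ> M - r F \<circ> M\<close>, i.e. of the conjugate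
  \<open>M\<^sup>-\<^sup>1 \<circ> f \<circ> M\<close> of \<open>f = [F : G]\<close> by \<open>M = [[p, q], [r, s]]\<close>.\<close>
definition conj_coeffs :: "complex \<Rightarrow> complex \<Rightarrow> complex \<Rightarrow> complex \<Rightarrow> coeffs2 \<Rightarrow> coeffs2" where
  "conj_coeffs p q r s c = (case c of (a0, a1, a2, b0, b1, b2) \<Rightarrow>
    (s * (a0 * p^2 + a1 * p * r + a2 * r^2) - q * (b0 * p^2 + b1 * p * r + b2 * r^2),
     s * (2 * a0 * p * q + a1 * (p * s + q * r) + 2 * a2 * r * s)
       - q * (2 * b0 * p * q + b1 * (p * s + q * r) + 2 * b2 * r * s),
     s * (a0 * q^2 + a1 * q * s + a2 * s^2) - q * (b0 * q^2 + b1 * q * s + b2 * s^2),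
     p * (b0 * p^2 + b1 * p * r + b2 * r^2) - r * (a0 * p^2 + a1 * p * r + a2 * r^2),
     p * (2 * b0 * p * q + b1 * (p * s + q * r) + 2 * b2 * r * s)
       - r * (2 * a0 * p * q + a1 * (p * s + q * r) + 2 * a2 * r * s),
     p * (b0 * q^2 + b1 * q * s + b2 * s^2) - r * (a0 * q^2 + a1 * q * s + a2 * s^2)))"

lemma formF_conj_coeffs: "formF (conj_coeffs p q r s c) X Y =
    s * formF c (p * X + q * Y) (r * X + s * Y) - q * formG c (p * X + q * Y) (r * X + s * Y)"
  and formG_conj_coeffs: "formG (conj_coeffs p q r s c) X Y =
    p * formG c (p * X + q * Y) (r * X + s * Y) - r * formF c (p * X + q * Y) (r * X + s * Y)"
  by (cases c; simp add: conj_coeffs_def formF_def formG_def power2_eq_square algebra_simps)+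

lemma conj_coeffs_conj_coeffs:
  "conj_coeffs t1 t2 t3 t4 (conj_coeffs p q r s c) =
    conj_coeffs (p * t1 + q * t3) (p * t2 + q * t4) (r * t1 + s * t3) (r * t2 + s * t4) c"
  by (cases c) (simp add: conj_coeffs_def power2_eq_square algebra_simps)

lemma conj_coeffs_id: "conj_coeffs 1 0 0 1 c = c"
  by (cases c) (simp add: conj_coeffs_def)

lemma coprime_conj_coeffs:
  assumes cp: "coprime_forms c" and det: "p * s - q * r \<noteq> 0"
  shows "coprime_forms (conj_coeffs p q r s c)"
  unfolding coprime_forms_def
proof (intro allI impI notI)
  fix X Y
  assume "(X, Y) \<noteq> (0, 0)"
    and zero: "formF (conj_coeffs p q r s c) X Y = 0 \<and> formG (conj_coeffs p q r s c) X Y = 0"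
  define U V where "U = p * X + q * Y" and "V = r * X + s * Y"
  have "(U, V) \<noteq> (0, 0)"
    unfolding U_def V_def by (rule linear_image_nonzero[OF det \<open>(X, Y) \<noteq> (0, 0)\<close>])
  moreover have "s * formF c U V - q * formG c U V = 0" "p * formG c U V - r * formF c U V = 0"
    using zero by (simp_all add: formF_conj_coeffs formG_conj_coeffs U_def V_def)
  moreover have "(p * s - q * r) * formF c U V =
      p * (s * formF c U V - q * formG c U V) + q * (p * formG c U V - r * formF c U V)"
    and "(p * s - q * r) * formG c U V =
      r * (s * formF c U V - q * formG c U V) + s * (p * formG c U V - r * formF c U V)"
    by (simp_all add: algebra_simps)
  ultimately show False
    using cp det unfolding coprime_forms_def by simp
qed

lemma ratmap_proj:
  assumes "(u, v) \<noteq> (0, 0)"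
  shows "ratmap c (proj u v) = proj (formF c u v) (formG c u v)"
proof -
  obtain k where "k \<noteq> 0" "hom (proj u v) = (k * u, k * v)"
    using hom_proj[OF assms] .
  then show ?thesis
    by (simp add: ratmap_def formF_scale formG_scale proj_scale)
qed

lemma ratmap_conj_coeffs:
  assumes cp: "coprime_forms c" and det: "p * s - q * r \<noteq> 0"
  shows "ratmap (conj_coeffs p q r s c) = mobius s (-q) (-r) p \<circ> ratmap c \<circ> mobius p q r s"
proof
  fix x
  obtain X Y where h: "hom x = (X, Y)"
    by fastforce
  define U V where "U = p * X + q * Y" and "V = r * X + s * Y"
  have UV: "(U, V) \<noteq> (0, 0)"
    unfolding U_def V_def using linear_image_nonzero[OF det] hom_nonzero[of x] h by simp
  then have FG: "(formF c U V, formG c U V) \<noteq> (0, 0)"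
    using cp unfolding coprime_forms_def by blast
  have "(mobius s (-q) (-r) p \<circ> ratmap c \<circ> mobius p q r s) x =
      mobius s (-q) (-r) p (proj (formF c U V) (formG c U V))"
    by (simp add: mobius_def[of p] h U_def[symmetric] V_def[symmetric] ratmap_proj[OF UV])
  also have "\<dots> = proj (s * formF c U V - q * formG c U V) (p * formG c U V - r * formF c U V)"
    by (simp add: mobius_proj[OF FG] algebra_simps)
  also have "\<dots> = ratmap (conj_coeffs p q r s c) x"
    by (simp add: ratmap_def h formF_conj_coeffs formG_conj_coeffs U_def V_def)
  finally show "ratmap (conj_coeffs p q r s c) x =
      (mobius s (-q) (-r) p \<circ> ratmap c \<circ> mobius p q r s) x" ..
qed

lemma ratmap_conj_coeffs_fixes_iff:
  assumes "coprime_forms c" "p * s - q * r \<noteq> 0"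
  shows "ratmap (conj_coeffs p q r s c) z = z \<longleftrightarrow> ratmap c (mobius p q r s z) = mobius p q r s z"
proof -
  have "mobius p q r s (mobius s (-q) (-r) p y) = y" "mobius s (-q) (-r) p (mobius p q r s y) = y" for y
    using pointfree_idE[OF mobius_adj_comp(1)[OF assms(2)]]
      pointfree_idE[OF mobius_adj_comp(2)[OF assms(2)]]
    by simp_all
  then show ?thesis
    unfolding ratmap_conj_coeffs[OF assms] comp_apply by (metis (no_types))
qed

lemma hol_conj_ratmap_conj_coeffs:
  assumes "coprime_forms c" "p * s - q * r \<noteq> 0"
  shows "hol_conj (ratmap c) (ratmap (conj_coeffs p q r s c))"
proof -
  have det: "s * p - (-q) * (-r) \<noteq> 0"
    using assms(2) by (simp add: algebra_simps)
  then show ?thesis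
    unfolding hol_conj_def ratmap_conj_coeffs[OF assms] using inv_mobius[OF det] by fastforce
qed

lemma hol_conj_ratmapE:
  assumes "coprime_forms c" "hol_conj (ratmap c) g"
  obtains p q r s where "p * s - q * r \<noteq> 0" "g = ratmap (conj_coeffs p q r s c)"
proof -
  from assms(2) obtain m1 m2 m3 m4 where det: "m1 * m4 - m2 * m3 \<noteq> 0"
    and g: "g = mobius m1 m2 m3 m4 \<circ> ratmap c \<circ> inv (mobius m1 m2 m3 m4)"
    unfolding hol_conj_def by blast
  have det': "m4 * m1 - (-m2) * (-m3) \<noteq> 0"
    using det by (simp add: algebra_simps)
  with g show ?thesis
    using ratmap_conj_coeffs[OF assms(1) det'] inv_mobius[OF det]
    by (intro that[where p = m4 and q = "-m2" and r = "-m3" and s = m1]) simp_all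
qed

lemma ratmap_eq_if_proportional:
  assumes "k \<noteq> 0" "\<And>X Y. formF c' X Y = k * formF c X Y" "\<And>X Y. formG c' X Y = k * formG c X Y"
  shows "ratmap c' = ratmap c"
  using assms by (simp add: fun_eq_iff ratmap_def proj_scale split: prod.split)

section \<open>Fixed points, multipliers and multiplicities\<close>

definition fixed_form :: "coeffs2 \<Rightarrow> complex \<Rightarrow> complex \<Rightarrow> complex" where
  "fixed_form c X Y = Y * formF c X Y - X * formG c X Y"

lemma fixed_form_scale: "fixed_form c (k * X) (k * Y) = k^3 * fixed_form c X Y"
  unfolding fixed_form_def formF_scale formG_scale by (simp add: power2_eq_square power3_eq_cube algebra_simps)

lemma fixed_form_conj_coeffs:
  "fixed_form (conj_coeffs p q r s c) X Y = fixed_form c (p * X + q * Y) (r * X + s * Y)"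
  by (simp add: fixed_form_def formF_conj_coeffs formG_conj_coeffs algebra_simps)

lemma coprime_forms_nonzero:
  assumes "coprime_forms c" "hom x = (X, Y)"
  shows "(formF c X Y, formG c X Y) \<noteq> (0, 0)"
  using assms hom_nonzero[of x] unfolding coprime_forms_def by auto

lemma ratmap_fixes_iff:
  assumes "coprime_forms c" "hom x = (X, Y)"
  shows "ratmap c x = x \<longleftrightarrow> fixed_form c X Y = 0"
  using proj_eq_iff[OF coprime_forms_nonzero[OF assms] assms(2)] assms(2)
  by (simp add: ratmap_def fixed_form_def)

lemma fixed_point_eigenvalue:
  assumes cp: "coprime_forms c" and hx: "hom x = (X, Y)" and fixed: "ratmap c x = x"
  obtains l where "l \<noteq> 0" "formF c X Y = l * X" "formG c X Y = l * Y"
proof -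
  have "Y * formF c X Y = X * formG c X Y"
    using ratmap_fixes_iff[OF cp hx] fixed by (simp add: fixed_form_def)
  with coprime_forms_nonzero[OF cp hx] hx show ?thesis
    by (cases x) (auto intro: that)
qed

lemma formG_nonzero_if_fixed: "ratmap c (Some w) = Some w \<Longrightarrow> formG c w 1 \<noteq> 0"
  by (simp add: ratmap_def proj_def split: if_splits)

definition fixed_poly :: "coeffs2 \<Rightarrow> complex poly" where
  "fixed_poly c = (case c of (a0, a1, a2, b0, b1, b2) \<Rightarrow> [:a2, a1 - b2, a0 - b1, -b0:])"

lemma poly_fixed_poly: "poly (fixed_poly c) t = fixed_form c t 1"
  by (cases c) (simp add: fixed_poly_def fixed_form_def formF_def formG_def algebra_simps power2_eq_square)

lemma fixed_poly_nonzero: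
  assumes cp: "coprime_forms c"
  shows "fixed_poly c \<noteq> 0"
proof
  assume "fixed_poly c = 0"
  moreover obtain a0 a1 a2 b0 b1 b2 where c: "c = (a0, a1, a2, b0, b1, b2)"
    by (cases c)
  ultimately have "a2 = 0" "a1 = b2" "a0 = b1" "b0 = 0"
    by (auto simp: fixed_poly_def)
  then have "formF c X Y = X * (a0 * X + a1 * Y)" "formG c X Y = Y * (a0 * X + a1 * Y)" for X Y
    by (simp_all add: c formF_def formG_def power2_eq_square algebra_simps)
  moreover obtain X Y :: complex where "(X, Y) \<noteq> (0, 0)" "a0 * X + a1 * Y = 0"
    by (cases "a0 = 0 \<and> a1 = 0") (auto intro: that[of 1 0] that[of "-a1" a0] simp: mult.commute)
  ultimately show False
    using cp unfolding coprime_forms_def by auto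
qed

lemma fixed_form_factor:
  assumes "coprime_forms c"
  obtains n Q where "poly Q w \<noteq> 0" "\<And>t. fixed_form c t 1 = (t - w)^n * poly Q t"
proof -
  obtain Q where "fixed_poly c = [:-w, 1:] ^ order w (fixed_poly c) * Q" "\<not> [:-w, 1:] dvd Q"
    using order_decomp[OF fixed_poly_nonzero[OF assms]] by blast
  moreover have "fixed_form c t 1 = (t - w) ^ order w (fixed_poly c) * poly Q t" for t
    unfolding poly_fixed_poly[symmetric] by (subst \<open>fixed_poly c = _\<close>) simp
  ultimately show ?thesis
    by (intro that[of Q "order w (fixed_poly c)"]) (auto simp: poly_eq_0_iff_dvd)
qed

lemma ratmap_has_fixed_point:
  assumes cp: "coprime_forms c"
  obtains x where "ratmap c x = x"
proof (cases "fixed_form c 1 0 = 0")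
  case True
  then show ?thesis
    using ratmap_fixes_iff[OF cp, of None] that by simp
next
  case False
  then have "\<not> (\<exists>a l. a \<noteq> 0 \<and> l = 0 \<and> fixed_poly c = pCons a l)"
    by (cases c) (auto simp: fixed_poly_def fixed_form_def formG_def)
  then obtain t where "poly (fixed_poly c) t = 0"
    using fundamental_theorem_of_algebra_alt by blast
  then show ?thesis
    using ratmap_fixes_iff[OF cp, of "Some t"] that by (simp add: poly_fixed_poly)
qed

definition jac_trace :: "coeffs2 \<Rightarrow> complex \<Rightarrow> complex \<Rightarrow> complex" where
  "jac_trace c X Y = (case c of (a0, a1, a2, b0, b1, b2) \<Rightarrow> (2 * a0 * X + a1 * Y) + (b1 * X + 2 * b2 * Y))"

lemma jac_trace_scale: "jac_trace c (k * X) (k * Y) = k * jac_trace c X Y"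
  by (cases c) (simp add: jac_trace_def algebra_simps)

lemma jac_trace_conj_coeffs:
  "jac_trace (conj_coeffs p q r s c) X Y = (p * s - q * r) * jac_trace c (p * X + q * Y) (r * X + s * Y)"
  by (cases c) (simp add: jac_trace_def conj_coeffs_def power2_eq_square algebra_simps)

definition affine_rat :: "coeffs2 \<Rightarrow> complex \<Rightarrow> complex" where
  "affine_rat c w = formF c w 1 / formG c w 1"

lemma local_expr_ratmap_Some: "local_expr (ratmap c) (Some z) = affine_rat c"
  by (simp add: fun_eq_iff local_expr_def from_chart_def to_chart_def ratmap_def affine_rat_def proj_def)

lemma local_expr_ratmap_None: "local_expr (ratmap c) None = affine_rat (conj_coeffs 0 1 1 0 c)"
proof
  fix w
  have "local_expr (ratmap c) None w = formG c 1 w / formF c 1 w"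
  proof (cases "w = 0")
    case False
    have "ratmap c (Some (1 / w)) = proj (w^2 * formF c (1 / w) 1) (w^2 * formG c (1 / w) 1)"
      using False by (simp add: ratmap_def proj_scale)
    also have "\<dots> = proj (formF c 1 w) (formG c 1 w)"
      using formF_scale[of c w "1 / w" 1] formG_scale[of c w "1 / w" 1] False by simp
    finally show ?thesis
      using False by (simp add: local_expr_def from_chart_def to_chart_def proj_def)
  qed (simp add: local_expr_def from_chart_def to_chart_def ratmap_def proj_def)
  then show "local_expr (ratmap c) None w = affine_rat (conj_coeffs 0 1 1 0 c) w"
    by (simp add: affine_rat_def formF_conj_coeffs formG_conj_coeffs)
qed

lemma local_expr_ratmap_chart:
  "\<exists>p q r s. p * s - q * r \<noteq> 0 \<and> hom x = (p * chart_pt x + q, r * chart_pt x + s) \<and>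
    (\<forall>c. local_expr (ratmap c) x = affine_rat (conj_coeffs p q r s c))"
proof (cases x)
  case None
  then show ?thesis
    by (intro exI[of _ 0] exI[of _ 1]) (simp add: chart_pt_def local_expr_ratmap_None)
next
  case (Some z)
  then show ?thesis
    by (intro exI[of _ 1] exI[of _ 0]) (simp add: chart_pt_def local_expr_ratmap_Some conj_coeffs_id)
qed

lemma affine_rat_conj_coeffs_scale:
  assumes "k \<noteq> 0"
  shows "affine_rat (conj_coeffs (k * p) (k * q) (k * r) (k * s) c) = affine_rat (conj_coeffs p q r s c)"
proof -
  have lin: "k * p * w + k * q * 1 = k * (p * w + q * 1)" "k * r * w + k * s * 1 = k * (r * w + s * 1)" for w
    by (simp_all add: algebra_simps)
  have "formF (conj_coeffs (k * p) (k * q) (k * r) (k * s) c) w 1 = k^3 * formF (conj_coeffs p q r s c) w 1"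
    and "formG (conj_coeffs (k * p) (k * q) (k * r) (k * s) c) w 1 = k^3 * formG (conj_coeffs p q r s c) w 1" for w
    unfolding formF_conj_coeffs formG_conj_coeffs lin formF_scale formG_scale
    by (simp_all add: power2_eq_square power3_eq_cube algebra_simps)
  with assms show ?thesis
    by (simp add: fun_eq_iff affine_rat_def)
qed

lemma holomorphic_formG: "(\<lambda>w. formG c w 1) holomorphic_on S"
  by (cases c) (auto simp: formG_def intro!: holomorphic_intros)

lemma open_formG_nonzero: "open {w. formG c w 1 \<noteq> 0}"
  by (intro open_Collect_neq holomorphic_on_imp_continuous_on holomorphic_formG continuous_intros)

lemma deriv_affine_rat_fixed:
  assumes G: "formG c w 1 \<noteq> 0" and F: "formF c w 1 = w * formG c w 1"
  shows "deriv (affine_rat c) w = jac_trace c w 1 / formG c w 1 - 2"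
proof -
  obtain a0 a1 a2 b0 b1 b2 where c: "c = (a0, a1, a2, b0, b1, b2)"
    by (cases c)
  define G' where "G' = formG c w 1"
  have D: "(affine_rat c has_field_derivative
      ((2 * a0 * w + a1) * G' - formF c w 1 * (2 * b0 * w + b1)) / G'^2) (at w)"
    unfolding affine_rat_def[abs_def] G'_def using G
    by (auto intro!: derivative_eq_intros simp: c formF_def formG_def power2_eq_square algebra_simps)
  have "((2 * a0 * w + a1) * G' - formF c w 1 * (2 * b0 * w + b1)) / G'^2 =
      ((2 * a0 * w + a1) - w * (2 * b0 * w + b1)) / G'"
    using G F by (simp add: G'_def power2_eq_square field_simps)
  also have "\<dots> = (jac_trace c w 1 - 2 * G') / G'"
    by (simp add: c jac_trace_def G'_def formG_def power2_eq_square algebra_simps)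
  also have "\<dots> = jac_trace c w 1 / G' - 2"
    using G by (simp add: G'_def diff_divide_distrib)
  finally show ?thesis
    using DERIV_imp_deriv[OF D] by (simp add: G'_def)
qed

text \<open>At a fixed point \<open>(F, G)(X, Y) = l (X, Y)\<close> the Jacobian of \<open>(F, G)\<close> has the eigenvalue
  \<open>2 l\<close> in the Euler direction \<open>(X, Y)\<close>, and \<open>l \<mu>\<close> transversally.\<close>
lemma multiplier_ratmap:
  assumes hx: "hom x = (X, Y)" and "formF c X Y = l * X" "formG c X Y = l * Y" "l \<noteq> 0"
  shows "multiplier (ratmap c) x = jac_trace c X Y / l - 2"
proof (cases x)
  case (Some z)
  with assms have "formG c z 1 = l" "formF c z 1 = z * formG c z 1"
    by auto
  with Some assms(1,4) show ?thesis
    by (simp add: multiplier_def local_expr_ratmap_Some chart_pt_def deriv_affine_rat_fixed)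
next
  case None
  define c' where "c' = conj_coeffs 0 1 1 0 c"
  from None assms have "formG c' 0 1 = - l" "formF c' 0 1 = 0 * formG c' 0 1"
    "jac_trace c' 0 1 = - jac_trace c X Y"
    by (auto simp: c'_def formF_conj_coeffs formG_conj_coeffs jac_trace_conj_coeffs)
  with None assms(4) show ?thesis
    by (simp add: multiplier_def local_expr_ratmap_None chart_pt_def c'_def[symmetric] deriv_affine_rat_fixed)
qed

lemma multiplier_conj_coeffs:
  assumes cp: "coprime_forms c" and det: "p * s - q * r \<noteq> 0"
    and fixed: "ratmap c (mobius p q r s z) = mobius p q r s z"
  shows "multiplier (ratmap (conj_coeffs p q r s c)) z = multiplier (ratmap c) (mobius p q r s z)"
proof -
  define D where "D = p * s - q * r"
  obtain X Y where hz: "hom z = (X, Y)"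
    by fastforce
  obtain U V where hx: "hom (mobius p q r s z) = (U, V)"
    by fastforce
  obtain k where k: "k \<noteq> 0" "p * X + q * Y = k * U" "r * X + s * Y = k * V"
    using mobius_hom_proportional[OF det hz hx] .
  obtain l where l: "l \<noteq> 0" "formF c U V = l * U" "formG c U V = l * V"
    using fixed_point_eigenvalue[OF cp hx fixed] .
  have "k * (s * U - q * V) = s * (k * U) - q * (k * V)" "k * (p * V - r * U) = p * (k * V) - r * (k * U)"
    by (simp_all add: algebra_simps)
  then have "k * (s * U - q * V) = D * X" "k * (p * V - r * U) = D * Y"
    unfolding k(2,3)[symmetric] by (simp_all add: D_def algebra_simps)
  moreover have "formF (conj_coeffs p q r s c) X Y = k * l * (k * (s * U - q * V))"
    and "formG (conj_coeffs p q r s c) X Y = k * l * (k * (p * V - r * U))"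
    unfolding formF_conj_coeffs formG_conj_coeffs k(2,3) formF_scale formG_scale l
    by (simp_all add: power2_eq_square algebra_simps)
  ultimately have "formF (conj_coeffs p q r s c) X Y = (k * l * D) * X"
    and "formG (conj_coeffs p q r s c) X Y = (k * l * D) * Y"
    by simp_all
  then have "multiplier (ratmap (conj_coeffs p q r s c)) z =
      jac_trace (conj_coeffs p q r s c) X Y / (k * l * D) - 2"
    using k(1) l(1) det by (intro multiplier_ratmap[OF hz]) (simp_all add: D_def)
  also have "\<dots> = jac_trace c U V / l - 2"
    using k(1) det by (simp add: jac_trace_conj_coeffs k(2,3) jac_trace_scale D_def)
  also have "\<dots> = multiplier (ratmap c) (mobius p q r s z)"
    using multiplier_ratmap[OF hx l(2,3,1)] ..
  finally show ?thesis .
qed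

lemma zorder_affine_rat_minus_id:
  assumes "open S" "w0 \<in> S" "\<And>w. w \<in> S \<Longrightarrow> formG c w 1 \<noteq> 0"
    and "h holomorphic_on S" "h w0 \<noteq> 0" "\<And>w. w \<in> S \<Longrightarrow> fixed_form c w 1 = (w - w0)^n * h w"
  shows "zorder (\<lambda>w. affine_rat c w - w) w0 = int n"
proof (rule zorder_eqI[OF assms(1,2)])
  show "(\<lambda>w. h w / formG c w 1) holomorphic_on S"
    using assms(3,4) by (intro holomorphic_intros holomorphic_formG) auto
  show "h w0 / formG c w0 1 \<noteq> 0"
    using assms(2,3,5) by simp
  fix w
  assume "w \<in> S"
  then show "affine_rat c w - w = h w / formG c w 1 * (w - w0) powi int n"
    using assms(3,6) by (simp add: affine_rat_def fixed_form_def field_simps)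
qed

lemma mobius_affine_diff:
  fixes k p q r s w w1 w2 :: "'a::field"
  assumes "k \<noteq> 0" "p * w1 + q = k * w2" "r * w1 + s = k" "r * w + s \<noteq> 0"
  shows "(p * w + q) / (r * w + s) - w2 = (w - w1) * ((p * s - q * r) / (k * (r * w + s)))"
proof -
  have "k * ((p * w + q) - w2 * (r * w + s)) = k * (p * w + q) - (k * w2) * (r * w + s)"
    by (simp add: algebra_simps)
  also have "\<dots> = (r * w1 + s) * (p * w + q) - (p * w1 + q) * (r * w + s)"
    unfolding assms(2,3) ..
  also have "\<dots> = (p * s - q * r) * (w - w1)"
    by (simp add: algebra_simps)
  finally have "(p * w + q) - w2 * (r * w + s) = (p * s - q * r) * (w - w1) / k"
    using assms(1) by (simp add: eq_divide_eq mult.commute)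
  moreover have "(p * w + q) / (r * w + s) - w2 = ((p * w + q) - w2 * (r * w + s)) / (r * w + s)"
    using assms(4) by (simp add: field_simps)
  ultimately show ?thesis
    by simp
qed

lemma zorder_affine_rat_conj_coeffs:
  assumes cp: "coprime_forms c" and det: "p * s - q * r \<noteq> 0" and k: "k \<noteq> 0"
    and w1: "p * w1 + q = k * w2" "r * w1 + s = k"
    and fixed: "ratmap c (Some w2) = Some w2"
  shows "zorder (\<lambda>w. affine_rat (conj_coeffs p q r s c) w - w) w1 = zorder (\<lambda>w. affine_rat c w - w) w2"
proof -
  define c' where "c' = conj_coeffs p q r s c"
  obtain n Q where Q: "poly Q w2 \<noteq> 0" "\<And>t. fixed_form c t 1 = (t - w2)^n * poly Q t"
    using fixed_form_factor[OF cp] by blast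
  have "zorder (\<lambda>w. affine_rat c w - w) w2 = n"
    using fixed formG_nonzero_if_fixed
    by (intro zorder_affine_rat_minus_id[where S = "{w. formG c w 1 \<noteq> 0}" and h = "\<lambda>w. poly Q w"])
       (auto simp: open_formG_nonzero Q intro: holomorphic_intros)
  moreover have "zorder (\<lambda>w. affine_rat c' w - w) w1 = n"
  proof (rule zorder_affine_rat_minus_id)
    let ?S = "{w. r * w + s \<noteq> 0} \<inter> {w. formG c' w 1 \<noteq> 0}"
    let ?E = "\<lambda>w. (p * s - q * r) / (k * (r * w + s))"
    show "open ?S"
      by (intro open_Int open_formG_nonzero open_Collect_neq continuous_intros)
    have "ratmap c' (Some w1) = Some w1"
      using ratmap_conj_coeffs_fixes_iff[OF cp det] fixed w1 k proj_scale[of k w2 1]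
      by (simp add: c'_def proj_def)
    then show "w1 \<in> ?S"
      using w1(2) k formG_nonzero_if_fixed by auto
    show "(\<lambda>w. (r * w + s)^3 * ?E w ^ n * poly Q ((p * w + q) / (r * w + s))) holomorphic_on ?S"
      by (intro holomorphic_intros) auto
    show "(r * w1 + s)^3 * ?E w1 ^ n * poly Q ((p * w1 + q) / (r * w1 + s)) \<noteq> 0"
      using w1 k det Q(1) by simp
    fix w
    assume "w \<in> ?S"
    then have nz: "r * w + s \<noteq> 0"
      by simp
    have "fixed_form c' w 1 = (r * w + s)^3 * fixed_form c ((p * w + q) / (r * w + s)) 1"
      using fixed_form_scale[of c "r * w + s" "(p * w + q) / (r * w + s)" 1] nz
      by (simp add: c'_def fixed_form_conj_coeffs)
    also have "\<dots> = (w - w1)^n * ((r * w + s)^3 * ?E w ^ n * poly Q ((p * w + q) / (r * w + s)))"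
      unfolding Q(2) mobius_affine_diff[OF k w1 nz] power_mult_distrib by (simp only: mult_ac)
    finally show "fixed_form c' w 1 =
        (w - w1)^n * ((r * w + s)^3 * ?E w ^ n * poly Q ((p * w + q) / (r * w + s)))" .
  qed (auto simp: c'_def)
  ultimately show ?thesis
    by (simp add: c'_def)
qed

text \<open>The order of \<open>f(w) - w\<close> at a fixed point does not depend on the affine chart.\<close>
lemma zorder_local_expr_ratmap:
  assumes cp: "coprime_forms c" and det: "n1 * n4 - n2 * n3 \<noteq> 0" and k: "k \<noteq> 0"
    and hx: "hom x = (X, Y)" and w: "n1 * w + n2 = k * X" "n3 * w + n4 = k * Y"
    and fixed: "ratmap c x = x"
  shows "zorder (\<lambda>v. local_expr (ratmap c) x v - v) (chart_pt x) =
    zorder (\<lambda>v. affine_rat (conj_coeffs n1 n2 n3 n4 c) v - v) w"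
proof -
  obtain s1 s2 s3 s4 where S: "s1 * s4 - s2 * s3 \<noteq> 0"
    "hom x = (s1 * chart_pt x + s2, s3 * chart_pt x + s4)"
    "\<And>c. local_expr (ratmap c) x = affine_rat (conj_coeffs s1 s2 s3 s4 c)"
    using local_expr_ratmap_chart[of x] by blast
  define w2 D where "w2 = chart_pt x" and "D = s1 * s4 - s2 * s3"
  define t1 t2 t3 t4 where "t1 = s4 * n1 - s2 * n3" and "t2 = s4 * n2 - s2 * n4"
    and "t3 = s1 * n3 - s3 * n1" and "t4 = s1 * n4 - s3 * n2"
  have X: "X = s1 * w2 + s2" and Y: "Y = s3 * w2 + s4"
    using S(2) hx by (simp_all add: w2_def)
  have fixed_chart: "ratmap (conj_coeffs s1 s2 s3 s4 c) (Some w2) = Some w2"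
    using ratmap_conj_coeffs_fixes_iff[OF cp S(1)] fixed proj_hom[OF hx] by (simp add: X Y)
  have "t1 * t4 - t2 * t3 = D * (n1 * n4 - n2 * n3)"
    by (simp add: t1_def t2_def t3_def t4_def D_def algebra_simps)
  then have det_T: "t1 * t4 - t2 * t3 \<noteq> 0"
    using S(1) det by (simp add: D_def)
  have "t1 * w + t2 = s4 * (n1 * w + n2) - s2 * (n3 * w + n4)"
    and "t3 * w + t4 = s1 * (n3 * w + n4) - s3 * (n1 * w + n2)"
    by (simp_all add: t1_def t2_def t3_def t4_def algebra_simps)
  then have T: "t1 * w + t2 = (k * D) * w2" "t3 * w + t4 = k * D"
    unfolding w X Y by (simp_all add: D_def algebra_simps)
  have "zorder (\<lambda>v. affine_rat (conj_coeffs t1 t2 t3 t4 (conj_coeffs s1 s2 s3 s4 c)) v - v) w =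
      zorder (\<lambda>v. affine_rat (conj_coeffs s1 s2 s3 s4 c) v - v) w2"
    using S(1) k
    by (intro zorder_affine_rat_conj_coeffs[OF coprime_conj_coeffs[OF cp S(1)] det_T _ T fixed_chart])
       (simp add: D_def)
  moreover have "conj_coeffs t1 t2 t3 t4 (conj_coeffs s1 s2 s3 s4 c) =
      conj_coeffs (D * n1) (D * n2) (D * n3) (D * n4) c"
    by (simp add: conj_coeffs_conj_coeffs t1_def t2_def t3_def t4_def D_def algebra_simps)
  ultimately show ?thesis
    using S(1) by (simp add: S(3) w2_def D_def affine_rat_conj_coeffs_scale)
qed

lemma fix_multiplicity_conj_coeffs:
  assumes cp: "coprime_forms c" and det: "p * s - q * r \<noteq> 0"
    and fixed: "ratmap c (mobius p q r s z) = mobius p q r s z"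
  shows "fix_multiplicity (ratmap (conj_coeffs p q r s c)) z = fix_multiplicity (ratmap c) (mobius p q r s z)"
proof -
  obtain t1 t2 t3 t4 where T: "t1 * t4 - t2 * t3 \<noteq> 0"
    "hom z = (t1 * chart_pt z + t2, t3 * chart_pt z + t4)"
    "\<And>c. local_expr (ratmap c) z = affine_rat (conj_coeffs t1 t2 t3 t4 c)"
    using local_expr_ratmap_chart[of z] by blast
  obtain U V where hx: "hom (mobius p q r s z) = (U, V)"
    by fastforce
  obtain k where k: "k \<noteq> 0"
    "p * (t1 * chart_pt z + t2) + q * (t3 * chart_pt z + t4) = k * U"
    "r * (t1 * chart_pt z + t2) + s * (t3 * chart_pt z + t4) = k * V"
    using mobius_hom_proportional[OF det T(2) hx] .
  have "(p * t1 + q * t3) * (r * t2 + s * t4) - (p * t2 + q * t4) * (r * t1 + s * t3) =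
      (p * s - q * r) * (t1 * t4 - t2 * t3)"
    by (simp add: algebra_simps)
  moreover have "(p * t1 + q * t3) * chart_pt z + (p * t2 + q * t4) = k * U"
    and "(r * t1 + s * t3) * chart_pt z + (r * t2 + s * t4) = k * V"
    using k(2,3) by (simp_all add: algebra_simps)
  ultimately have "zorder (\<lambda>v. local_expr (ratmap c) (mobius p q r s z) v - v) (chart_pt (mobius p q r s z)) =
      zorder (\<lambda>v. affine_rat (conj_coeffs (p * t1 + q * t3) (p * t2 + q * t4)
        (r * t1 + s * t3) (r * t2 + s * t4) c) v - v) (chart_pt z)"
    using det T(1) by (intro zorder_local_expr_ratmap[OF cp _ k(1) hx _ _ fixed]) simp_all
  then show ?thesis
    by (simp add: fix_multiplicity_def T(3) conj_coeffs_conj_coeffs)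
qed

lemma fix_multiplicity_ratmap_eqI:
  assumes cp: "coprime_forms c" and fixed: "ratmap c x = x" and det: "p * s - q * r \<noteq> 0"
    and w: "hom x = (p * w + q, r * w + s)"
    and h: "h holomorphic_on UNIV" "h w \<noteq> 0" "\<And>v. fixed_form c (p * v + q) (r * v + s) = (v - w)^n * h v"
  shows "fix_multiplicity (ratmap c) x = n"
proof -
  define c' where "c' = conj_coeffs p q r s c"
  have "ratmap c' (Some w) = Some w"
    using ratmap_conj_coeffs_fixes_iff[OF cp det] fixed proj_hom[OF w] by (simp add: c'_def)
  then have "zorder (\<lambda>v. affine_rat c' v - v) w = n"
    using formG_nonzero_if_fixed h
    by (intro zorder_affine_rat_minus_id[where S = "{v. formG c' v 1 \<noteq> 0}" and h = h])
       (auto simp: open_formG_nonzero c'_def fixed_form_conj_coeffs intro: holomorphic_on_subset)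
  moreover have "zorder (\<lambda>v. local_expr (ratmap c) x v - v) (chart_pt x) = zorder (\<lambda>v. affine_rat c' v - v) w"
    using zorder_local_expr_ratmap[OF cp det one_neq_zero w _ _ fixed] by (simp add: c'_def)
  ultimately show ?thesis
    by (simp add: fix_multiplicity_def)
qed

lemma fix_multipliers_conj_coeffs:
  assumes cp: "coprime_forms c" and det: "p * s - q * r \<noteq> 0"
  shows "fix_multipliers (ratmap (conj_coeffs p q r s c)) = fix_multipliers (ratmap c)"
proof -
  let ?M = "mobius p q r s" and ?g = "ratmap (conj_coeffs p q r s c)"
  have bij: "bij ?M"
    using bij_mobius[OF det] .
  have "{x. ratmap c x = x} = ?M ` {z. ratmap c (?M z) = ?M z}"
    using bij by (auto simp: bij_def surj_def image_iff)
  also have "\<dots> = ?M ` {z. ?g z = z}"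
    using ratmap_conj_coeffs_fixes_iff[OF cp det] by simp
  finally have "fix_multipliers (ratmap c) =
      (\<Sum>z\<in>{z. ?g z = z}. replicate_mset (fix_multiplicity (ratmap c) (?M z)) (multiplier (ratmap c) (?M z)))"
    unfolding fix_multipliers_def
    using sum.reindex[OF inj_on_subset[OF bij_is_inj[OF bij] subset_UNIV]] by simp
  also have "\<dots> = fix_multipliers ?g"
    unfolding fix_multipliers_def
  proof (intro sum.cong refl)
    fix z
    assume "z \<in> {z. ?g z = z}"
    then have "ratmap c (?M z) = ?M z"
      using ratmap_conj_coeffs_fixes_iff[OF cp det] by simp
    then show "replicate_mset (fix_multiplicity (ratmap c) (?M z)) (multiplier (ratmap c) (?M z)) =
        replicate_mset (fix_multiplicity ?g z) (multiplier ?g z)"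
      by (simp add: multiplier_conj_coeffs[OF cp det] fix_multiplicity_conj_coeffs[OF cp det])
  qed
  finally show ?thesis ..
qed

lemma fix_multipliers_hol_conj:
  assumes "coprime_forms c" "hol_conj (ratmap c) g"
  shows "fix_multipliers g = fix_multipliers (ratmap c)"
  using assms(2) by (rule hol_conj_ratmapE[OF assms(1)]) (simp add: fix_multipliers_conj_coeffs[OF assms(1)])

section \<open>Normal forms\<close>

lemma coprime_forms_zero_infinity_iff:
  "coprime_forms (a0, a1, 0, 0, b1, b2) \<longleftrightarrow> a0 \<noteq> 0 \<and> b2 \<noteq> 0 \<and> a0 * b2 \<noteq> a1 * b1"
  (is "coprime_forms ?c \<longleftrightarrow> _")
proof
  assume cp: "coprime_forms ?c"
  have "\<not> (formF ?c X Y = 0 \<and> formG ?c X Y = 0)" if "(X, Y) \<noteq> (0, 0)" for X Y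
    using cp that unfolding coprime_forms_def by blast
  from this[of 1 0] this[of 0 1] this[of "-a1" a0] show "a0 \<noteq> 0 \<and> b2 \<noteq> 0 \<and> a0 * b2 \<noteq> a1 * b1"
    by (auto simp: formF_def formG_def power2_eq_square algebra_simps)
next
  assume nz: "a0 \<noteq> 0 \<and> b2 \<noteq> 0 \<and> a0 * b2 \<noteq> a1 * b1"
  show "coprime_forms ?c"
    unfolding coprime_forms_def
  proof (intro allI impI notI)
    fix X Y
    assume "(X, Y) \<noteq> (0, 0)" "formF ?c X Y = 0 \<and> formG ?c X Y = 0"
    moreover have "formF ?c X Y = X * (a0 * X + a1 * Y)" "formG ?c X Y = Y * (b1 * X + b2 * Y)"
      by (simp_all add: formF_def formG_def power2_eq_square algebra_simps)
    moreover have "(a0 * b2 - a1 * b1) * X = b2 * (a0 * X + a1 * Y) - a1 * (b1 * X + b2 * Y)"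
      by (simp add: algebra_simps)
    ultimately show False
      using nz by auto
  qed
qed

lemma multiplier_zero_infinity:
  assumes "a0 \<noteq> 0" "b2 \<noteq> 0"
  shows "multiplier (ratmap (a0, a1, 0, 0, b1, b2)) (Some 0) = a1 / b2"
    and "multiplier (ratmap (a0, a1, 0, 0, b1, b2)) None = b1 / a0"
  using multiplier_ratmap[of "Some 0" 0 1 "(a0, a1, 0, 0, b1, b2)" b2]
    multiplier_ratmap[of None 1 0 "(a0, a1, 0, 0, b1, b2)" a0] assms
  by (simp_all add: formF_def formG_def jac_trace_def field_simps)

text \<open>The map \<open>z \<mapsto> (z\<^sup>2 + a z) / (b z + 1)\<close>, with fixed points \<open>0\<close> and \<open>\<infinity>\<close> of
  multipliers \<open>a\<close> and \<open>b\<close>, and the map \<open>z \<mapsto> z + 1/z\<close>.\<close>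
definition normal_coeffs :: "complex \<Rightarrow> complex \<Rightarrow> coeffs2" where
  "normal_coeffs a b = (1, a, 0, 0, b, 1)"

definition parabolic_coeffs :: coeffs2 where
  "parabolic_coeffs = (1, 0, 1, 0, 1, 0)"

definition third_multiplier :: "complex \<Rightarrow> complex \<Rightarrow> complex" where
  "third_multiplier a b = (2 - a - b) / (1 - a * b)"

definition normal_forms :: "coeffs2 set" where
  "normal_forms = insert parabolic_coeffs {normal_coeffs a b | a b. a * b \<noteq> 1}"

lemma coprime_normal_coeffs_iff: "coprime_forms (normal_coeffs a b) \<longleftrightarrow> a * b \<noteq> 1"
  by (auto simp: normal_coeffs_def coprime_forms_zero_infinity_iff)

lemma hol_conj_normal_coeffs_zero_infinity:
  assumes cp: "coprime_forms (a0, a1, 0, 0, b1, b2)"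
  shows "hol_conj (ratmap (a0, a1, 0, 0, b1, b2)) (ratmap (normal_coeffs (a1 / b2) (b1 / a0)))"
proof -
  let ?c = "(a0, a1, 0, 0, b1, b2)"
  have nz: "a0 \<noteq> 0" "b2 \<noteq> 0"
    using cp by (simp_all add: coprime_forms_zero_infinity_iff)
  define l where "l = b2 / a0"
  have "formF (conj_coeffs l 0 0 1 ?c) X Y = (l * b2) * formF (normal_coeffs (a1 / b2) (b1 / a0)) X Y"
    and "formG (conj_coeffs l 0 0 1 ?c) X Y = (l * b2) * formG (normal_coeffs (a1 / b2) (b1 / a0)) X Y"
    for X Y
    unfolding formF_conj_coeffs formG_conj_coeffs
    using nz by (simp_all add: normal_coeffs_def formF_def formG_def l_def power2_eq_square field_simps)
  then have "ratmap (conj_coeffs l 0 0 1 ?c) = ratmap (normal_coeffs (a1 / b2) (b1 / a0))"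
    using nz by (intro ratmap_eq_if_proportional[of "l * b2"]) (simp_all add: l_def)
  moreover have "hol_conj (ratmap ?c) (ratmap (conj_coeffs l 0 0 1 ?c))"
    using cp nz by (intro hol_conj_ratmap_conj_coeffs) (simp_all add: l_def)
  ultimately show ?thesis
    by simp
qed

lemma hol_conj_normal_coeffs_of_fixed_points:
  assumes cp: "coprime_forms c" and "x \<noteq> y" "ratmap c x = x" "ratmap c y = y"
  shows "multiplier (ratmap c) x * multiplier (ratmap c) y \<noteq> 1"
    and "hol_conj (ratmap c) (ratmap (normal_coeffs (multiplier (ratmap c) x) (multiplier (ratmap c) y)))"
proof -
  obtain p q r s where det: "p * s - q * r \<noteq> 0"
    and M: "mobius p q r s (Some 0) = x" "mobius p q r s None = y"
    using mobius_two_points[OF \<open>x \<noteq> y\<close>] by blast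
  define c' where "c' = conj_coeffs p q r s c"
  have cp': "coprime_forms c'"
    unfolding c'_def by (rule coprime_conj_coeffs[OF cp det])
  have fixed': "ratmap c' (Some 0) = Some 0" "ratmap c' None = None"
    using assms M by (simp_all add: c'_def ratmap_conj_coeffs_fixes_iff[OF cp det])
  obtain a0 a1 b1 b2 where c': "c' = (a0, a1, 0, 0, b1, b2)"
  proof -
    obtain a0 a1 a2 b0 b1 b2 where "c' = (a0, a1, a2, b0, b1, b2)"
      by (cases c')
    moreover from this have "a2 = 0" "b0 = 0"
      using fixed' ratmap_fixes_iff[OF cp', of "Some 0"] ratmap_fixes_iff[OF cp', of None]
      by (simp_all add: fixed_form_def formF_def formG_def)
    ultimately show thesis
      using that by blast
  qed
  have nz: "a0 \<noteq> 0" "b2 \<noteq> 0" "a0 * b2 \<noteq> a1 * b1"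
    using cp' by (simp_all add: c' coprime_forms_zero_infinity_iff)
  have "multiplier (ratmap c') (Some 0) = multiplier (ratmap c) x"
    and "multiplier (ratmap c') None = multiplier (ratmap c) y"
    using multiplier_conj_coeffs[OF cp det, of "Some 0"] multiplier_conj_coeffs[OF cp det, of None] assms M
    by (simp_all add: c'_def)
  then have mult: "multiplier (ratmap c) x = a1 / b2" "multiplier (ratmap c) y = b1 / a0"
    using multiplier_zero_infinity[OF nz(1,2)] by (simp_all add: c')
  have "hol_conj (ratmap c) (ratmap c')"
    unfolding c'_def by (rule hol_conj_ratmap_conj_coeffs[OF cp det])
  moreover have "hol_conj (ratmap c') (ratmap (normal_coeffs (a1 / b2) (b1 / a0)))"
    using hol_conj_normal_coeffs_zero_infinity cp' by (simp add: c')
  ultimately show "hol_conj (ratmap c) (ratmap (normal_coeffs (multiplier (ratmap c) x) (multiplier (ratmap c) y)))"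
    unfolding mult by (rule hol_conj_trans)
  show "multiplier (ratmap c) x * multiplier (ratmap c) y \<noteq> 1"
    using nz unfolding mult by (simp add: field_simps)
qed

lemma fixed_form_normal_coeffs: "fixed_form (normal_coeffs a b) X Y = X * Y * ((1 - b) * X + (a - 1) * Y)"
  by (simp add: fixed_form_def normal_coeffs_def formF_def formG_def power2_eq_square algebra_simps)

lemma ratmap_normal_coeffs_fixes_iff:
  assumes "a * b \<noteq> 1"
  shows "ratmap (normal_coeffs a b) x = x \<longleftrightarrow>
    x = Some 0 \<or> x = None \<or> (b \<noteq> 1 \<and> x = Some ((1 - a) / (1 - b)))"
proof -
  have "ratmap (normal_coeffs a b) x = x \<longleftrightarrow> fixed_form (normal_coeffs a b) (fst (hom x)) (snd (hom x)) = 0"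
    using assms by (intro ratmap_fixes_iff) (simp_all add: coprime_normal_coeffs_iff)
  moreover have "(1 - b) * z + (a - 1) = 0 \<longleftrightarrow> b \<noteq> 1 \<and> z = (1 - a) / (1 - b)" for z
    using assms by (cases "b = 1") (auto simp: eq_divide_eq algebra_simps)
  ultimately show ?thesis
    by (cases x) (simp_all add: fixed_form_normal_coeffs)
qed

lemma multiplier_normal_coeffs:
  "multiplier (ratmap (normal_coeffs a b)) (Some 0) = a"
  "multiplier (ratmap (normal_coeffs a b)) None = b"
  using multiplier_zero_infinity[of 1 1 a b] by (simp_all add: normal_coeffs_def)

lemma multiplier_normal_coeffs_third:
  assumes ab: "a * b \<noteq> 1" and b: "b \<noteq> 1"
  shows "multiplier (ratmap (normal_coeffs a b)) (Some ((1 - a) / (1 - b))) = third_multiplier a b"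
proof -
  define z where "z = (1 - a) / (1 - b)"
  have l: "b * z + 1 = (1 - a * b) / (1 - b)"
    using b by (simp add: z_def field_simps)
  have "z * (1 - b) = 1 - a"
    using b by (simp add: z_def)
  moreover have "z^2 + a * z - z * (b * z + 1) = z * (z * (1 - b) - (1 - a))"
    by (simp add: power2_eq_square algebra_simps)
  ultimately have "z^2 + a * z = z * (b * z + 1)"
    by simp
  moreover have "b * z + 1 \<noteq> 0"
    using ab b l by simp
  ultimately have "multiplier (ratmap (normal_coeffs a b)) (Some z) = ((2 + b) * z + a + 2) / (b * z + 1) - 2"
    by (subst multiplier_ratmap[where X = z and Y = 1 and l = "b * z + 1"])
       (simp_all add: normal_coeffs_def formF_def formG_def jac_trace_def power2_eq_square algebra_simps)
  also have "\<dots> = ((2 - b) * z + a) / (b * z + 1)"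
    using \<open>b * z + 1 \<noteq> 0\<close> by (simp add: field_simps)
  also have "(2 - b) * z + a = (2 - a - b) / (1 - b)"
    using b by (simp add: z_def field_simps)
  also have "(2 - a - b) / (1 - b) / (b * z + 1) = third_multiplier a b"
    using ab b by (simp add: l third_multiplier_def)
  finally show ?thesis
    by (simp add: z_def)
qed

lemma fix_multiplicity_normal_coeffs_zero:
  assumes ab: "a * b \<noteq> 1"
  shows "fix_multiplicity (ratmap (normal_coeffs a b)) (Some 0) = (if a = 1 then 2 else 1)"
proof -
  have cp: "coprime_forms (normal_coeffs a b)"
    using ab by (simp add: coprime_normal_coeffs_iff)
  have fixed: "ratmap (normal_coeffs a b) (Some 0) = Some 0"
    using ratmap_normal_coeffs_fixes_iff[OF ab] by blast
  note eqI = fix_multiplicity_ratmap_eqI[OF cp fixed, where p = 1 and q = 0 and r = 0 and s = 1 and w = 0]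
  show ?thesis
  proof (cases "a = 1")
    case True
    with ab have "b \<noteq> 1"
      by auto
    have "fixed_form (normal_coeffs a b) (1 * v + 0) (0 * v + 1) = (v - 0)^2 * (1 - b)" for v
      using True by (simp add: fixed_form_normal_coeffs power2_eq_square)
    with eqI[where h = "\<lambda>_. 1 - b"] \<open>b \<noteq> 1\<close> True show ?thesis
      by simp
  next
    case False
    have "fixed_form (normal_coeffs a b) (1 * v + 0) (0 * v + 1) = (v - 0)^1 * ((1 - b) * v + (a - 1))" for v
      by (simp add: fixed_form_normal_coeffs algebra_simps)
    with eqI[where h = "\<lambda>v. (1 - b) * v + (a - 1)"] False show ?thesis
      by (simp add: holomorphic_intros)
  qed
qed

lemma fix_multiplicity_normal_coeffs_infinity:
  assumes ab: "a * b \<noteq> 1"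
  shows "fix_multiplicity (ratmap (normal_coeffs a b)) None = (if b = 1 then 2 else 1)"
proof -
  have cp: "coprime_forms (normal_coeffs a b)"
    using ab by (simp add: coprime_normal_coeffs_iff)
  have fixed: "ratmap (normal_coeffs a b) None = None"
    using ratmap_normal_coeffs_fixes_iff[OF ab] by blast
  note eqI = fix_multiplicity_ratmap_eqI[OF cp fixed, where p = 0 and q = 1 and r = 1 and s = 0 and w = 0]
  show ?thesis
  proof (cases "b = 1")
    case True
    with ab have "a \<noteq> 1"
      by auto
    have "fixed_form (normal_coeffs a b) (0 * v + 1) (1 * v + 0) = (v - 0)^2 * (a - 1)" for v
      using True by (simp add: fixed_form_normal_coeffs power2_eq_square)
    with eqI[where h = "\<lambda>_. a - 1"] \<open>a \<noteq> 1\<close> True show ?thesis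
      by simp
  next
    case False
    have "fixed_form (normal_coeffs a b) (0 * v + 1) (1 * v + 0) = (v - 0)^1 * ((a - 1) * v + (1 - b))" for v
      by (simp add: fixed_form_normal_coeffs algebra_simps)
    with eqI[where h = "\<lambda>v. (a - 1) * v + (1 - b)"] False show ?thesis
      by (simp add: holomorphic_intros)
  qed
qed

lemma fix_multiplicity_normal_coeffs_third:
  assumes ab: "a * b \<noteq> 1" and a: "a \<noteq> 1" and b: "b \<noteq> 1"
  shows "fix_multiplicity (ratmap (normal_coeffs a b)) (Some ((1 - a) / (1 - b))) = 1"
proof -
  define z where "z = (1 - a) / (1 - b)"
  have cp: "coprime_forms (normal_coeffs a b)"
    using ab by (simp add: coprime_normal_coeffs_iff)
  have fixed: "ratmap (normal_coeffs a b) (Some z) = Some z"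
    using ratmap_normal_coeffs_fixes_iff[OF ab] b by (simp add: z_def)
  have a_eq: "a = 1 - z * (1 - b)" and "z \<noteq> 0"
    using a b by (simp_all add: z_def)
  have "fixed_form (normal_coeffs a b) (1 * v + 0) (0 * v + 1) = (v - z)^1 * ((1 - b) * v)" for v
    unfolding fixed_form_normal_coeffs by (subst a_eq) (simp add: algebra_simps)
  with fix_multiplicity_ratmap_eqI[OF cp fixed, where p = 1 and q = 0 and r = 0 and s = 1 and w = z
      and h = "\<lambda>v. (1 - b) * v"] b \<open>z \<noteq> 0\<close> show ?thesis
    by (simp add: holomorphic_intros z_def)
qed

lemma fix_multipliers_normal_coeffs:
  assumes ab: "a * b \<noteq> 1"
  shows "fix_multipliers (ratmap (normal_coeffs a b)) = {#a, b, third_multiplier a b#}"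
proof -
  define N z where "N = ratmap (normal_coeffs a b)" and "z = (1 - a) / (1 - b)"
  have fixed: "N x = x \<longleftrightarrow> x = Some 0 \<or> x = None \<or> (b \<noteq> 1 \<and> x = Some z)" for x
    unfolding N_def z_def by (rule ratmap_normal_coeffs_fixes_iff[OF ab])
  note mult = fix_multiplicity_normal_coeffs_zero[OF ab, folded N_def]
    fix_multiplicity_normal_coeffs_infinity[OF ab, folded N_def]
    fix_multiplicity_normal_coeffs_third[OF ab, folded N_def z_def]
    and mu = multiplier_normal_coeffs[of a b, folded N_def] multiplier_normal_coeffs_third[OF ab, folded N_def z_def]
  consider "b = 1" | "a = 1" "b \<noteq> 1" | "a \<noteq> 1" "b \<noteq> 1"
    by blast
  then have "fix_multipliers N = {#a, b, third_multiplier a b#}"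
  proof cases
    case 1
    with ab have "a \<noteq> 1"
      by auto
    with 1 have "{x. N x = x} = {Some 0, None}" "fix_multiplicity N (Some 0) = 1"
      "fix_multiplicity N None = 2" "third_multiplier a b = 1"
      by (auto simp: fixed mult third_multiplier_def)
    then show ?thesis
      using 1 by (simp add: fix_multipliers_def mu numeral_2_eq_2)
  next
    case 2
    then have "{x. N x = x} = {Some 0, None}" "fix_multiplicity N (Some 0) = 2"
      "fix_multiplicity N None = 1" "third_multiplier a b = 1"
      by (auto simp: fixed mult third_multiplier_def z_def)
    then show ?thesis
      using 2 by (simp add: fix_multipliers_def mu numeral_2_eq_2 add_mset_commute)
  next
    case 3
    then have "z \<noteq> 0"
      by (simp add: z_def)
    with 3 have "{x. N x = x} = {Some 0, None, Some z}" "fix_multiplicity N (Some 0) = 1"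
      "fix_multiplicity N None = 1" "fix_multiplicity N (Some z) = 1"
      by (auto simp: fixed mult)
    with 3 \<open>z \<noteq> 0\<close> show ?thesis
      by (simp add: fix_multipliers_def mu add_mset_commute)
  qed
  then show ?thesis
    by (simp add: N_def)
qed

lemma coprime_parabolic_coeffs: "coprime_forms parabolic_coeffs"
  unfolding coprime_forms_def parabolic_coeffs_def formF_def formG_def
  by (auto simp: power2_eq_square)

lemma fix_multipliers_parabolic_coeffs: "fix_multipliers (ratmap parabolic_coeffs) = {#1, 1, 1#}"
proof -
  have fixed_form: "fixed_form parabolic_coeffs X Y = Y^3" for X Y
    by (simp add: fixed_form_def parabolic_coeffs_def formF_def formG_def power2_eq_square power3_eq_cube
        algebra_simps)
  have fixes_iff: "ratmap parabolic_coeffs x = x \<longleftrightarrow> x = None" for x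
    using ratmap_fixes_iff[OF coprime_parabolic_coeffs, of x "fst (hom x)" "snd (hom x)"]
    by (cases x) (simp_all add: fixed_form)
  then have fixed: "{x. ratmap parabolic_coeffs x = x} = {None}"
    by auto
  have "multiplier (ratmap parabolic_coeffs) None = 1"
    by (subst multiplier_ratmap[where X = 1 and Y = 0 and l = 1])
       (simp_all add: parabolic_coeffs_def formF_def formG_def jac_trace_def)
  moreover have "fix_multiplicity (ratmap parabolic_coeffs) None = 3"
    using fix_multiplicity_ratmap_eqI[OF coprime_parabolic_coeffs fixes_iff[THEN iffD2, OF refl],
        where p = 0 and q = 1 and r = 1 and s = 0 and w = 0 and h = "\<lambda>_. 1"]
    by (simp add: fixed_form)
  ultimately show ?thesis
    by (simp add: fix_multipliers_def fixed numeral_3_eq_3)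
qed

lemma hol_conj_parabolic_coeffs:
  assumes cp: "coprime_forms (a0, a1, a2, 0, a0, a1)"
  shows "hol_conj (ratmap (a0, a1, a2, 0, a0, a1)) (ratmap parabolic_coeffs)"
proof -
  let ?c = "(a0, a1, a2, 0, a0, a1)"
  have "\<not> (formF ?c X Y = 0 \<and> formG ?c X Y = 0)" if "(X, Y) \<noteq> (0, 0)" for X Y
    using cp that unfolding coprime_forms_def by blast
  from this[of 1 0] this[of "-a1" a0] have nz: "a0 \<noteq> 0" "a2 \<noteq> 0"
    by (auto simp: formF_def formG_def power2_eq_square algebra_simps)
  define l s where "l = csqrt (a2 / a0)" and "s = - a1 / a0"
  have l2: "a0 * l^2 = a2"
    using nz by (simp add: l_def)
  then have "l \<noteq> 0"
    using nz by auto
  have "formF (conj_coeffs l s 0 1 ?c) X Y = a2 * formF parabolic_coeffs X Y"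
    and "formG (conj_coeffs l s 0 1 ?c) X Y = a2 * formG parabolic_coeffs X Y" for X Y
    unfolding formF_conj_coeffs formG_conj_coeffs using nz l2[symmetric]
    by (simp_all add: parabolic_coeffs_def formF_def formG_def s_def power2_eq_square field_simps)
  then have "ratmap (conj_coeffs l s 0 1 ?c) = ratmap parabolic_coeffs"
    using nz by (intro ratmap_eq_if_proportional)
  moreover have "hol_conj (ratmap ?c) (ratmap (conj_coeffs l s 0 1 ?c))"
    using cp \<open>l \<noteq> 0\<close> by (intro hol_conj_ratmap_conj_coeffs) simp_all
  ultimately show ?thesis
    by simp
qed

text \<open>Moving the only fixed point to \<open>\<infinity>\<close> turns the map into \<open>z \<mapsto> z + a2 / (a0 z + a1)\<close>,
  an affine conjugate of \<open>z + 1/z\<close>.\<close>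
lemma hol_conj_parabolic_if_unique_fixed_point:
  assumes cp: "coprime_forms c" and unique: "\<And>y. ratmap c y = y \<longleftrightarrow> y = x"
  shows "hol_conj (ratmap c) (ratmap parabolic_coeffs)"
proof -
  obtain y :: sphere where "y \<noteq> x"
    by (cases x) auto
  then obtain p q r s where det: "p * s - q * r \<noteq> 0"
    and M: "mobius p q r s (Some 0) = y" "mobius p q r s None = x"
    using mobius_two_points by metis
  define c' where "c' = conj_coeffs p q r s c"
  have cp': "coprime_forms c'"
    unfolding c'_def by (rule coprime_conj_coeffs[OF cp det])
  have fixed': "ratmap c' z = z \<longleftrightarrow> z = None" for z
  proof -
    have "ratmap c' z = z \<longleftrightarrow> mobius p q r s z = x"
      using unique by (simp add: c'_def ratmap_conj_coeffs_fixes_iff[OF cp det])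
    also have "\<dots> \<longleftrightarrow> z = None"
      using bij_mobius[OF det] M(2) by (metis bij_is_inj inj_eq)
    finally show ?thesis .
  qed
  obtain a0 a1 a2 b0 b1 b2 where c': "c' = (a0, a1, a2, b0, b1, b2)"
    by (cases c')
  have "b0 = 0"
    using fixed'[of None] ratmap_fixes_iff[OF cp', of None]
    by (simp add: c' fixed_form_def formF_def formG_def)
  moreover have "(a0 - b1) * t^2 + (a1 - b2) * t + a2 \<noteq> 0" for t
    using fixed'[of "Some t"] ratmap_fixes_iff[OF cp', of "Some t"] \<open>b0 = 0\<close>
    by (simp add: c' fixed_form_def formF_def formG_def power2_eq_square algebra_simps)
  then have "a0 = b1 \<and> a1 = b2"
    using fundamental_theorem_of_algebra_alt[of "[:a2, a1 - b2, a0 - b1:]"]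
    by (auto simp: power2_eq_square algebra_simps)
  ultimately have "hol_conj (ratmap c') (ratmap parabolic_coeffs)"
    using hol_conj_parabolic_coeffs cp' by (simp add: c')
  with hol_conj_ratmap_conj_coeffs[OF cp det] show ?thesis
    unfolding c'_def by (rule hol_conj_trans)
qed

lemma ex_normal_form:
  assumes cp: "coprime_forms c"
  shows "\<exists>n\<in>normal_forms. hol_conj (ratmap c) (ratmap n)"
proof -
  obtain x where fx: "ratmap c x = x"
    using ratmap_has_fixed_point[OF cp] .
  show ?thesis
  proof (cases "\<exists>y. y \<noteq> x \<and> ratmap c y = y")
    case True
    then obtain y where "y \<noteq> x" "ratmap c y = y"
      by blast
    with hol_conj_normal_coeffs_of_fixed_points[OF cp not_sym[OF this(1)] fx this(2)] show ?thesis
      unfolding normal_forms_def by blast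
  next
    case False
    with fx have "ratmap c y = y \<longleftrightarrow> y = x" for y
      by blast
    with hol_conj_parabolic_if_unique_fixed_point[OF cp] show ?thesis
      unfolding normal_forms_def by blast
  qed
qed

lemma hol_conj_normal_coeffs_if_multipliers_eq:
  assumes ab: "a * b \<noteq> 1" and ab': "a' * b' \<noteq> 1"
    and eq: "{#a, b, third_multiplier a b#} = {#a', b', third_multiplier a' b'#}"
  shows "hol_conj (ratmap (normal_coeffs a b)) (ratmap (normal_coeffs a' b'))"
proof -
  define N c where "N = ratmap (normal_coeffs a b)" and "c = third_multiplier a b"
  define P where "P = (if b = 1 then None else Some ((1 - a) / (1 - b)))"
  have fixed: "N (Some 0) = Some 0" "N None = None" "N P = P"
    using ratmap_normal_coeffs_fixes_iff[OF ab] by (simp_all add: N_def P_def)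
  have mu: "multiplier N (Some 0) = a" "multiplier N None = b" "multiplier N P = c"
    using multiplier_normal_coeffs multiplier_normal_coeffs_third[OF ab] ab
    by (auto simp: N_def P_def c_def third_multiplier_def)
  \<comment> \<open>\<open>P\<close> coincides with \<open>0\<close> or \<open>\<infinity>\<close> only when both multipliers there are \<open>1\<close>\<close>
  have "Some 0 \<noteq> P" if "a * c \<noteq> 1"
    using that ab by (auto simp: P_def c_def third_multiplier_def split: if_splits)
  moreover have "None \<noteq> P" if "b * c \<noteq> 1"
    using that ab by (auto simp: P_def c_def third_multiplier_def)
  moreover have "{#a', b', third_multiplier a' b'#} = {#a, b, c#}"
    using eq by (simp add: c_def)
  then have "(a' = a \<and> b' = b) \<or> (a' = a \<and> b' = c) \<or> (a' = b \<and> b' = a) \<or>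
      (a' = b \<and> b' = c) \<or> (a' = c \<and> b' = a) \<or> (a' = c \<and> b' = b)"
    by (auto simp: add_eq_conv_ex)
  ultimately obtain x y where "x \<noteq> y" "N x = x" "N y = y" "multiplier N x = a'" "multiplier N y = b'"
    using fixed mu ab' by (metis mult.commute option.distinct(1))
  then show ?thesis
    using hol_conj_normal_coeffs_of_fixed_points(2)[of "normal_coeffs a b" x y] ab
    by (simp add: N_def coprime_normal_coeffs_iff)
qed

lemma normal_coeffs_multipliers_ne_parabolic:
  assumes "a * b \<noteq> 1"
  shows "{#a, b, third_multiplier a b#} \<noteq> {#1, 1, 1#}"
proof
  assume "{#a, b, third_multiplier a b#} = {#1, 1, 1#}"
  then have "a \<in># {#1, 1, 1#}" "b \<in># {#1, 1, 1#}"
    by (metis add_mset_commute union_single_eq_member)+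
  with assms show False
    by simp
qed

lemma third_multiplier_relation:
  assumes "a * b \<noteq> 1"
  shows "m = third_multiplier a b \<longleftrightarrow> a * b * m - (a + b + m) + 2 = 0"
proof -
  have "m = third_multiplier a b \<longleftrightarrow> m * (1 - a * b) = 2 - a - b"
    using assms by (simp add: third_multiplier_def eq_divide_eq)
  moreover have "a * b * m - (a + b + m) + 2 = (2 - a - b) - m * (1 - a * b)"
    by (simp add: algebra_simps)
  then have "a * b * m - (a + b + m) + 2 = 0 \<longleftrightarrow> m * (1 - a * b) = 2 - a - b"
    by (metis right_minus_eq)
  ultimately show ?thesis
    by simp
qed

lemma coprime_normal_form: "n \<in> normal_forms \<Longrightarrow> coprime_forms n"
  by (auto simp: normal_forms_def coprime_normal_coeffs_iff coprime_parabolic_coeffs)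

lemma fix_multipliers_normal_form:
  assumes "n \<in> normal_forms"
  shows "\<exists>m1 m2 m3. fix_multipliers (ratmap n) = {#m1, m2, m3#} \<and> m1 * m2 * m3 - (m1 + m2 + m3) + 2 = 0"
  using assms unfolding normal_forms_def
proof (elim insertE CollectE exE conjE)
  assume "n = parabolic_coeffs"
  then show ?thesis
    by (intro exI[of _ 1]) (simp add: fix_multipliers_parabolic_coeffs)
next
  fix a b
  assume "n = normal_coeffs a b" "a * b \<noteq> 1"
  then show ?thesis
    using third_multiplier_relation[of a b "third_multiplier a b"]
    by (intro exI[of _ a] exI[of _ b] exI[of _ "third_multiplier a b"])
       (simp add: fix_multipliers_normal_coeffs)
qed

lemma multiplier_relation_products_one:
  fixes m1 m2 m3 :: complex
  assumes rel: "m1 * m2 * m3 - (m1 + m2 + m3) + 2 = 0" and "m1 * m2 = 1" "m1 * m3 = 1"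
  shows "m1 = 1 \<and> m2 = 1 \<and> m3 = 1"
proof -
  have "m2 = m3"
    using assms(2,3) by (metis mult_left_cancel mult_zero_left zero_neq_one)
  with assms have "m1 + m2 = 2"
    by algebra
  then have "(m1 - 1)^2 = 1 - m1 * m2"
    by (simp add: power2_eq_square algebra_simps flip: \<open>m1 + m2 = 2\<close>)
  with assms(2) have "m1 = 1"
    by simp
  with \<open>m1 + m2 = 2\<close> \<open>m2 = m3\<close> show ?thesis
    by simp
qed

lemma normal_form_realizes_multipliers:
  assumes rel: "m1 * m2 * m3 - (m1 + m2 + m3) + 2 = 0"
  shows "\<exists>n\<in>normal_forms. fix_multipliers (ratmap n) = {#m1, m2, m3#}"
proof -
  have normal: "\<exists>n\<in>normal_forms. fix_multipliers (ratmap n) = {#a, b, m#}"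
    if "a * b \<noteq> 1" "a * b * m - (a + b + m) + 2 = 0" for a b m
    using that fix_multipliers_normal_coeffs[OF that(1)] third_multiplier_relation[OF that(1), of m]
    by (intro bexI[of _ "normal_coeffs a b"]) (auto simp: normal_forms_def)
  consider "m1 * m2 \<noteq> 1" | "m1 * m3 \<noteq> 1" | "m1 * m2 = 1" "m1 * m3 = 1"
    by blast
  then show ?thesis
  proof cases
    case 1
    with normal rel show ?thesis
      by blast
  next
    case 2
    with normal[of m1 m3 m2] rel show ?thesis
      by (simp add: algebra_simps add_mset_commute)
  next
    case 3
    with multiplier_relation_products_one[OF rel] fix_multipliers_parabolic_coeffs show ?thesis
      unfolding normal_forms_def by auto
  qed
qed

lemma hol_conj_normal_forms:
  assumes "n \<in> normal_forms" "n' \<in> normal_forms"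
    and eq: "fix_multipliers (ratmap n) = fix_multipliers (ratmap n')"
  shows "hol_conj (ratmap n) (ratmap n')"
proof -
  from assms(1,2) consider
      "n = parabolic_coeffs" "n' = parabolic_coeffs"
    | a b where "n = parabolic_coeffs" "n' = normal_coeffs a b" "a * b \<noteq> 1"
    | a b where "n = normal_coeffs a b" "n' = parabolic_coeffs" "a * b \<noteq> 1"
    | a b a' b' where "n = normal_coeffs a b" "n' = normal_coeffs a' b'" "a * b \<noteq> 1" "a' * b' \<noteq> 1"
    unfolding normal_forms_def by blast
  then show ?thesis
  proof cases
    case 1
    then show ?thesis
      by (simp add: hol_conj_refl)
  next
    case (2 a b)
    with eq normal_coeffs_multipliers_ne_parabolic[of a b] show ?thesis
      by (simp add: fix_multipliers_normal_coeffs fix_multipliers_parabolic_coeffs)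
  next
    case (3 a b)
    with eq normal_coeffs_multipliers_ne_parabolic[of a b] show ?thesis
      by (simp add: fix_multipliers_normal_coeffs fix_multipliers_parabolic_coeffs)
  next
    case (4 a b a' b')
    with eq show ?thesis
      by (simp add: fix_multipliers_normal_coeffs hol_conj_normal_coeffs_if_multipliers_eq)
  qed
qed

section \<open>Elementary symmetric functions of three numbers\<close>

lemma prod_mset_linear_factors3:
  fixes m1 m2 m3 :: "'a::comm_ring_1"
  shows "(\<Prod>x\<in>#{#m1, m2, m3#}. [:-x, 1:]) =
    [:-(m1 * m2 * m3), m1 * m2 + m1 * m3 + m2 * m3, -(m1 + m2 + m3), 1:]"
  by (simp add: algebra_simps)

lemma proots_prod_mset_linear_factors: "proots (\<Prod>x\<in>#M. [:-x, 1:]) = M"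
proof (induction M)
  case (add x M)
  have "(\<Prod>y\<in>#M. [:-y, 1:]) \<noteq> 0"
    by (auto simp: prod_mset_zero_iff)
  then have "proots ([:-x, 1:] * (\<Prod>y\<in>#M. [:-y, 1:])) = add_mset x M"
    using add.IH by (subst proots_mult) simp_all
  then show ?case
    by simp
qed simp

lemma sigma12_mset3: "sigma12 {#m1, m2, m3#} = (m1 + m2 + m3, m1 * m2 + m1 * m3 + m2 * m3)"
  unfolding sigma12_def
proof (rule the_equality)
  fix s
  assume "\<exists>n1 n2 n3. {#m1, m2, m3#} = {#n1, n2, n3#} \<and> s = (n1 + n2 + n3, n1 * n2 + n1 * n3 + n2 * n3)"
  then obtain n1 n2 n3 where "{#m1, m2, m3#} = {#n1, n2, n3#}"
    and s: "s = (n1 + n2 + n3, n1 * n2 + n1 * n3 + n2 * n3)"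
    by blast
  then have "[:-(m1 * m2 * m3), m1 * m2 + m1 * m3 + m2 * m3, -(m1 + m2 + m3), 1:] =
      [:-(n1 * n2 * n3), n1 * n2 + n1 * n3 + n2 * n3, -(n1 + n2 + n3), 1:]"
    by (metis prod_mset_linear_factors3)
  then have "m1 + m2 + m3 = n1 + n2 + n3" "m1 * m2 + m1 * m3 + m2 * m3 = n1 * n2 + n1 * n3 + n2 * n3"
    by (simp_all only: pCons_eq_iff neg_equal_iff_equal)
  then show "s = (m1 + m2 + m3, m1 * m2 + m1 * m3 + m2 * m3)"
    using s by simp
qed blast

lemma mset3_eq_if_symmetric_eq:
  fixes m1 m2 m3 n1 n2 n3 :: complex
  assumes "m1 + m2 + m3 = n1 + n2 + n3" "m1 * m2 + m1 * m3 + m2 * m3 = n1 * n2 + n1 * n3 + n2 * n3"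
    and "m1 * m2 * m3 = n1 * n2 * n3"
  shows "{#m1, m2, m3#} = {#n1, n2, n3#}"
  using proots_prod_mset_linear_factors[of "{#m1, m2, m3#}"]
    proots_prod_mset_linear_factors[of "{#n1, n2, n3#}"]
  by (simp only: prod_mset_linear_factors3 assms)

lemma ex_mset3_symmetric:
  fixes s1 s2 s3 :: complex
  obtains m1 m2 m3 where "m1 + m2 + m3 = s1" "m1 * m2 + m1 * m3 + m2 * m3 = s2" "m1 * m2 * m3 = s3"
proof -
  define P where "P = [:-s3, s2, -s1, 1:]"
  have "size (proots P) = 3"
    by (simp add: P_def size_proots_complex)
  moreover obtain xs where xs: "mset xs = proots P"
    using ex_mset by blast
  ultimately have "length xs = 3"
    by (metis size_mset)
  then obtain m1 m2 m3 where "xs = [m1, m2, m3]"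
    by (auto simp: numeral_3_eq_3 length_Suc_conv)
  with xs have M: "proots P = {#m1, m2, m3#}"
    by simp
  have "P = (\<Prod>x\<in>#proots P. [:-x, 1:])"
    using complex_poly_decompose_multiset[of P] by (simp add: P_def)
  then have "[:-s3, s2, -s1, 1:] = [:-(m1 * m2 * m3), m1 * m2 + m1 * m3 + m2 * m3, -(m1 + m2 + m3), 1:]"
    by (simp only: M prod_mset_linear_factors3 flip: P_def)
  then have "s3 = m1 * m2 * m3" "s2 = m1 * m2 + m1 * m3 + m2 * m3" "s1 = m1 + m2 + m3"
    by (simp_all only: pCons_eq_iff neg_equal_iff_equal)
  then show ?thesis
    using that[of m1 m2 m3] by simp
qed

section \<open>The moduli space\<close>

lemma bij_betw_quotient_the_elem:
  assumes eqv: "equiv A r" and rel: "\<And>x y. x \<in> A \<Longrightarrow> y \<in> A \<Longrightarrow> (x, y) \<in> r \<longleftrightarrow> \<phi> x = \<phi> y"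
  shows "bij_betw (\<lambda>C. the_elem (\<phi> ` C)) (A // r) (\<phi> ` A)"
proof -
  have image_class: "\<phi> ` (r `` {x}) = {\<phi> x}" if "x \<in> A" for x
  proof -
    have "r `` {x} \<subseteq> A"
      using eqv by (auto simp: equiv_def refl_on_def)
    then have "\<phi> ` (r `` {x}) \<subseteq> {\<phi> x}"
      using rel that by auto
    moreover have "x \<in> r `` {x}"
      using equiv_class_self[OF eqv that] .
    ultimately show ?thesis
      by blast
  qed
  show ?thesis
  proof (rule bij_betwI')
    fix C D
    assume "C \<in> A // r" "D \<in> A // r"
    then obtain x y where "x \<in> A" "C = r `` {x}" "y \<in> A" "D = r `` {y}"
      by (auto elim!: quotientE)
    then show "the_elem (\<phi> ` C) = the_elem (\<phi> ` D) \<longleftrightarrow> C = D"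
      by (simp add: image_class eq_equiv_class_iff[OF eqv] rel)
  next
    fix C
    assume "C \<in> A // r"
    then show "the_elem (\<phi> ` C) \<in> \<phi> ` A"
      by (auto elim!: quotientE simp: image_class)
  next
    fix s
    assume "s \<in> \<phi> ` A"
    then obtain x where "x \<in> A" "s = \<phi> x"
      by blast
    then show "\<exists>C\<in>A // r. s = the_elem (\<phi> ` C)"
      by (intro bexI[of _ "r `` {x}"]) (simp_all add: image_class quotientI)
  qed
qed

lemma Rat2E:
  assumes "f \<in> Rat2"
  obtains c where "coprime_forms c" "f = ratmap c"
  using assms unfolding Rat2_def by blast

lemma ratmap_in_Rat2: "coprime_forms c \<Longrightarrow> ratmap c \<in> Rat2"
  unfolding Rat2_def by blast

lemma Rat2_normal_form:
  assumes "f \<in> Rat2"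
  obtains n where "n \<in> normal_forms" "hol_conj f (ratmap n)" "fix_multipliers f = fix_multipliers (ratmap n)"
proof -
  obtain c where cp: "coprime_forms c" and f: "f = ratmap c"
    using assms by (rule Rat2E)
  obtain n where n: "n \<in> normal_forms" "hol_conj (ratmap c) (ratmap n)"
    using ex_normal_form[OF cp] by blast
  with fix_multipliers_hol_conj[OF cp] f show ?thesis
    by (intro that[of n]) simp_all
qed

lemma Rat2_fix_multipliers_relation:
  "\<forall>f\<in>Rat2. \<exists>m1 m2 m3. fix_multipliers f = {#m1, m2, m3#} \<and> m1 * m2 * m3 - (m1 + m2 + m3) + 2 = 0"
  by (metis Rat2_normal_form fix_multipliers_normal_form)

lemma Rat2_realizes_multipliers:
  "\<forall>m1 m2 m3 :: complex. m1 * m2 * m3 - (m1 + m2 + m3) + 2 = 0 \<longrightarrow>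
    (\<exists>f\<in>Rat2. fix_multipliers f = {#m1, m2, m3#})"
  by (metis normal_form_realizes_multipliers coprime_normal_form ratmap_in_Rat2)

lemma hol_conj_iff_fix_multipliers:
  "\<forall>f\<in>Rat2. \<forall>g\<in>Rat2. hol_conj f g \<longleftrightarrow> fix_multipliers f = fix_multipliers g"
proof (intro ballI iffI)
  fix f g
  assume "f \<in> Rat2" "g \<in> Rat2"
  then obtain n n' where n: "n \<in> normal_forms" "hol_conj f (ratmap n)"
      "fix_multipliers f = fix_multipliers (ratmap n)"
    and n': "n' \<in> normal_forms" "hol_conj g (ratmap n')"
      "fix_multipliers g = fix_multipliers (ratmap n')"
    by (metis Rat2_normal_form)
  show "fix_multipliers f = fix_multipliers g" if "hol_conj f g"
    using \<open>f \<in> Rat2\<close> that fix_multipliers_hol_conj by (metis Rat2E)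
  show "hol_conj f g" if "fix_multipliers f = fix_multipliers g"
  proof -
    have "hol_conj (ratmap n) (ratmap n')"
      using n n' that by (intro hol_conj_normal_forms) simp_all
    then show ?thesis
      using n(2) n'(2) by (blast intro: hol_conj_trans hol_conj_sym)
  qed
qed

lemma sigma12_fix_multipliers_eq_iff:
  assumes f: "f \<in> Rat2" and g: "g \<in> Rat2"
  shows "sigma12 (fix_multipliers f) = sigma12 (fix_multipliers g) \<longleftrightarrow> fix_multipliers f = fix_multipliers g"
proof
  from Rat2_fix_multipliers_relation f obtain m1 m2 m3 where m: "fix_multipliers f = {#m1, m2, m3#}"
    and rel_m: "m1 * m2 * m3 - (m1 + m2 + m3) + 2 = 0"
    by blast
  from Rat2_fix_multipliers_relation g obtain n1 n2 n3 where n: "fix_multipliers g = {#n1, n2, n3#}"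
    and rel_n: "n1 * n2 * n3 - (n1 + n2 + n3) + 2 = 0"
    by blast
  assume "sigma12 (fix_multipliers f) = sigma12 (fix_multipliers g)"
  then have sum: "m1 + m2 + m3 = n1 + n2 + n3"
    and pairs: "m1 * m2 + m1 * m3 + m2 * m3 = n1 * n2 + n1 * n3 + n2 * n3"
    by (simp_all add: m n sigma12_mset3)
  have "m1 * m2 * m3 = (m1 + m2 + m3) - 2"
    using rel_m by (simp add: algebra_simps)
  also have "\<dots> = (n1 + n2 + n3) - 2"
    unfolding sum ..
  also have "\<dots> = n1 * n2 * n3"
    using rel_n by (simp add: algebra_simps)
  finally show "fix_multipliers f = fix_multipliers g"
    unfolding m n using sum pairs by (intro mset3_eq_if_symmetric_eq)
qed simp

lemma sigma12_fix_multipliers_surj: "(\<lambda>f. sigma12 (fix_multipliers f)) ` Rat2 = UNIV"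
proof (intro set_eqI iffI)
  fix s :: "complex \<times> complex"
  obtain m1 m2 m3 where sum: "m1 + m2 + m3 = fst s" and pairs: "m1 * m2 + m1 * m3 + m2 * m3 = snd s"
    and "m1 * m2 * m3 = fst s - 2"
    by (rule ex_mset3_symmetric)
  then have "m1 * m2 * m3 - (m1 + m2 + m3) + 2 = 0"
    by simp
  with Rat2_realizes_multipliers obtain f where "f \<in> Rat2" "fix_multipliers f = {#m1, m2, m3#}"
    by blast
  with sum pairs show "s \<in> (\<lambda>f. sigma12 (fix_multipliers f)) ` Rat2"
    by (intro image_eqI[of _ _ f]) (simp_all add: sigma12_mset3)
qed simp

lemma bij_betw_M2_sigma12:
  "bij_betw (\<lambda>C. the_elem ((\<lambda>f. sigma12 (fix_multipliers f)) ` C)) M2 (UNIV :: (complex \<times> complex) set)"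
proof -
  have "(f, g) \<in> conj_rel \<longleftrightarrow> sigma12 (fix_multipliers f) = sigma12 (fix_multipliers g)"
    if "f \<in> Rat2" "g \<in> Rat2" for f g
    using that hol_conj_iff_fix_multipliers sigma12_fix_multipliers_eq_iff by (simp add: conj_rel_def)
  from bij_betw_quotient_the_elem[OF equiv_conj_rel this] show ?thesis
    by (simp add: M2_def sigma12_fix_multipliers_surj)
qed

theorem lemma3p1:
  shows "(\<forall>f\<in>Rat2. \<exists>m1 m2 m3. fix_multipliers f = {#m1, m2, m3#} \<and>
            m1 * m2 * m3 - (m1 + m2 + m3) + 2 = 0)
       \<and> (\<forall>m1 m2 m3 :: complex. m1 * m2 * m3 - (m1 + m2 + m3) + 2 = 0 \<longrightarrow>
            (\<exists>f\<in>Rat2. fix_multipliers f = {#m1, m2, m3#}))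
       \<and> (\<forall>f\<in>Rat2. \<forall>g\<in>Rat2. hol_conj f g \<longleftrightarrow> fix_multipliers f = fix_multipliers g)
       \<and> bij_betw (\<lambda>C. the_elem ((\<lambda>f. sigma12 (fix_multipliers f)) ` C)) M2 (UNIV :: (complex \<times> complex) set)"
  using Rat2_fix_multipliers_relation Rat2_realizes_multipliers hol_conj_iff_fix_multipliers
    bij_betw_M2_sigma12
  by blast

end
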